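(* Let $\rho>0$, consider Algorithm 2 (described in the context) with parameters $\hat\sigma,\theta,\hat\theta,\eta,\tau,\lambda_1$, let $d_0$ be the distance from $x_0$ to the solution set $(F+N_C)^{-1}(0)$, and let $\sigma:=\frac{2\hat\theta}{\eta L}$ (so $0<\sigma<1$). Then: (a) Algorithm 2 finds $y\in\mathcal H$ and $\nu\in N_C(y)$ with $\|F(y)+\nu\|\le\rho$ in at most $$\left\lceil\Big(\frac{2}{\tau\eta(1-\sigma)}\Big)\frac{d_0^2}{\rho}\right\rceil+\left\lceil\frac{1}{2\tau}\log^+\Big(\frac{\eta+2\hat\theta/L}{\lambda_1^2\rho}\Big)\right\rceil$$ iterations; (b) Algorithm 2 finds a triple $(y,v,\varepsilon)\in\mathcal H\times\mathcal H\times\mathbb R_+$ with $v\in(F+N_C)^\varepsilon(y)$ and $\max\{\|v\|,\varepsilon\}\le\rho$ in at most $$\max\left\{\left\lceil\Big(\frac{2\sqrt[3]{4}}{\tau\eta^{2/3}(1-\sigma^2)^{1/3}}\Big)\Big(\frac{d_0^2}{\rho}\Big)^{2/3}\right\rceil,\left\lceil\Big(\frac{2\sqrt[3]{4}}{\tau\eta^{2/3}(1-\sigma^2)^{2/3}}\Big)\Big(\frac{d_0^3}{\rho}\Big)^{2/3}\right\rceil\right\}+\left\lceil\frac{1}{2\tau}\log^+\Big(\frac{\eta+2\hat\theta/L}{\lambda_1^2\rho}\Big)\right\rceil$$ iterations.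
   Context: Setting: $\mathcal H$ real Hilbert space; $C\subseteq\mathcal H$ nonempty closed convex; $N_C(x)=\{\nu:\langle\nu,y-x\rangle\le0\ \forall y\in C\}$ if $x\in C$, $N_C(x)=\emptyset$ otherwise. $F:C\to\mathcal H$ is monotone, continuously differentiable, and $\|F'(x)-F'(y)\|\le L\|x-y\|$ for all $x,y\in C$, with $L>0$; the set $(F+N_C)^{-1}(0)$ of $x$ with $0\in F(x)+N_C(x)$ is nonempty. For $y\in C$, $F_y(x):=F(y)+F'(y)(x-y)$. For set-valued $T$ and $\varepsilon\ge0$, $T^\varepsilon(x)=\{v:\langle v-u,x-z\rangle\ge-\varepsilon\ \forall z,\ \forall u\in T(z)\}$. $\log^+(t)=\max\{\log t,0\}$. Parameters: $0\le\hat\sigma<1/2$; $0<\theta<(1-\hat\sigma)(1-2\hat\sigma)$; $\hat\theta:=\theta\big(\frac{\hat\sigma}{1-\hat\sigma}+\frac{\theta}{(1-\hat\sigma)^2}\big)$; $\eta>2\hat\theta/L$; $\tau:=\dfrac{2(\theta-\hat\theta)}{2\theta+\frac{\eta L}{2}+\sqrt{(2\theta+\frac{\eta L}{2})^2-4\theta(\theta-\hat\theta)}}$ (one has $0<\tau<1$). Algorithm 2: input $x_0\in C$, $y_0:=x_0$, $\nu_0:=0$, $\lambda_1>0$ with $\lambda_1^2\|F(y_0)\|\le2\theta/L$. For $k=1,2,\dots$: if $F(y_{k-1})+\nu_{k-1}=0$, stop and return $y_{k-1}$. If $\frac{\lambda_kL}{2}\|\lambda_k(F(y_{k-1})+\nu_{k-1})+y_{k-1}-x_{k-1}\|\le\hat\theta$,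 set $y_k=y_{k-1}$, $\nu_k=\nu_{k-1}$; otherwise find any $(y_k,\nu_k)$ with $\nu_k\in N_C(y_k)$ and $\|\lambda_k(F_{y_{k-1}}(y_k)+\nu_k)+y_k-x_{k-1}\|\le\hat\sigma\|y_k-y_{k-1}\|$. Then, if $\lambda_k\|y_k-x_{k-1}\|\ge\eta$, set $x_k=x_{k-1}-\tau\lambda_k(F(y_k)+\nu_k)$ and $\lambda_{k+1}=(1-\tau)\lambda_k$; else set $x_k=x_{k-1}$ and $\lambda_{k+1}=\lambda_k/(1-\tau)$. Standing assumption: the algorithm never stops at the first test, i.e. $F(y_{k-1})+\nu_{k-1}\neq0$ for all $k$. "Finds within $M$ iterations" means that a pair/triple with the stated property is available among the quantities computed in the first $M$ iterations (the pairs $(y_k,\nu_k)$, or weighted ergodic averages of $y_k$ and $F(y_k)+\nu_k$ with weights $\lambda_k$ over the iterations with $\lambda_k\|y_k-x_{k-1}\|\ge\eta$, with $\varepsilon$ the corresponding weighted average of $\langle y_k-\bar y,F(y_k)+\nu_k-\bar v\rangle$). *)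

theory Defs
  imports "HOL-Analysis.Analysis"
begin

definition normal_cone :: "'a::real_inner set \<Rightarrow> 'a \<Rightarrow> 'a set" where
  "normal_cone C x = (if x \<in> C then {\<nu>. \<forall>y\<in>C. inner \<nu> (y - x) \<le> 0} else {})"

definition FN_op :: "('a::real_inner \<Rightarrow> 'a) \<Rightarrow> 'a set \<Rightarrow> 'a \<Rightarrow> 'a set" where
  "FN_op F C x = (\<lambda>\<nu>. F x + \<nu>) ` normal_cone C x"

definition enlargement :: "('a::real_inner \<Rightarrow> 'a set) \<Rightarrow> real \<Rightarrow> 'a \<Rightarrow> 'a set" where
  "enlargement T \<epsilon> x = {v. \<forall>z. \<forall>u\<in>T z. inner (v - u) (x - z) \<ge> - \<epsilon>}"

definition sol_set :: "('a::real_inner \<Rightarrow> 'a) \<Rightarrow> 'a set \<Rightarrow> 'a set" where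
  "sol_set F C = {x. 0 \<in> FN_op F C x}"

definition log_plus :: "real \<Rightarrow> real" where
  "log_plus t = max (ln t) 0"

definition theta_hat :: "real \<Rightarrow> real \<Rightarrow> real" where
  "theta_hat \<sigma>h \<theta> = \<theta> * (\<sigma>h / (1 - \<sigma>h) + \<theta> / (1 - \<sigma>h)^2)"

definition tau_param :: "real \<Rightarrow> real \<Rightarrow> real \<Rightarrow> real \<Rightarrow> real" where
  "tau_param \<sigma>h \<theta> \<eta> L =
     (let th = theta_hat \<sigma>h \<theta>; b = 2 * \<theta> + \<eta> * L / 2 in
      2 * (\<theta> - th) / (b + sqrt (b^2 - 4 * \<theta> * (\<theta> - th))))"

text \<open>A run of Algorithm 2 (with all nondeterministic choices), together with the
  standing assumption that the algorithm never stops at its first test.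
  Indices: x 0 = x_0, y 0 = y_0, \<nu> 0 = \<nu>_0; lam k = \<lambda>_k for k \<ge> 1 (lam 0 unused).\<close>
definition alg2_run ::
  "('a::real_inner \<Rightarrow> 'a) \<Rightarrow> ('a \<Rightarrow> 'a \<Rightarrow>\<^sub>L 'a) \<Rightarrow> 'a set \<Rightarrow> real \<Rightarrow> real \<Rightarrow> real \<Rightarrow> real \<Rightarrow>
   (nat \<Rightarrow> 'a) \<Rightarrow> (nat \<Rightarrow> 'a) \<Rightarrow> (nat \<Rightarrow> 'a) \<Rightarrow> (nat \<Rightarrow> real) \<Rightarrow> bool" where
  "alg2_run F F' C L \<sigma>h \<theta> \<eta> x y \<nu> lam \<longleftrightarrow>
     (let th = theta_hat \<sigma>h \<theta>; \<tau> = tau_param \<sigma>h \<theta> \<eta> L in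
     x 0 \<in> C \<and> y 0 = x 0 \<and> \<nu> 0 = 0 \<and> lam 1 > 0 \<and> (lam 1)^2 * norm (F (y 0)) \<le> 2 * \<theta> / L \<and>
     (\<forall>k. F (y k) + \<nu> k \<noteq> 0) \<and>
     (\<forall>k\<ge>1.
        (if lam k * L / 2 * norm (lam k *\<^sub>R (F (y (k-1)) + \<nu> (k-1)) + y (k-1) - x (k-1)) \<le> th
         then y k = y (k-1) \<and> \<nu> k = \<nu> (k-1)
         else \<nu> k \<in> normal_cone C (y k) \<and>
              norm (lam k *\<^sub>R (F (y (k-1)) + blinfun_apply (F' (y (k-1))) (y k - y (k-1)) + \<nu> k)
                    + y k - x (k-1)) \<le> \<sigma>h * norm (y k - y (k-1))) \<and>
        (if lam k * norm (y k - x (k-1)) \<ge> \<eta>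
         then x k = x (k-1) - (\<tau> * lam k) *\<^sub>R (F (y k) + \<nu> k) \<and> lam (k+1) = (1 - \<tau>) * lam k
         else x k = x (k-1) \<and> lam (k+1) = lam k / (1 - \<tau>))))"

definition good_steps :: "real \<Rightarrow> (nat \<Rightarrow> 'a::real_normed_vector) \<Rightarrow> (nat \<Rightarrow> 'a) \<Rightarrow> (nat \<Rightarrow> real) \<Rightarrow> nat \<Rightarrow> nat set" where
  "good_steps \<eta> x y lam k = {j \<in> {1..k}. lam j * norm (y j - x (j-1)) \<ge> \<eta>}"

definition erg_y :: "real \<Rightarrow> (nat \<Rightarrow> 'a::real_normed_vector) \<Rightarrow> (nat \<Rightarrow> 'a) \<Rightarrow> (nat \<Rightarrow> real) \<Rightarrow> nat \<Rightarrow> 'a" where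
  "erg_y \<eta> x y lam k =
     (1 / (\<Sum>j\<in>good_steps \<eta> x y lam k. lam j)) *\<^sub>R (\<Sum>j\<in>good_steps \<eta> x y lam k. lam j *\<^sub>R y j)"

definition erg_v :: "('a::real_normed_vector \<Rightarrow> 'a) \<Rightarrow> real \<Rightarrow> (nat \<Rightarrow> 'a) \<Rightarrow> (nat \<Rightarrow> 'a) \<Rightarrow> (nat \<Rightarrow> 'a) \<Rightarrow> (nat \<Rightarrow> real) \<Rightarrow> nat \<Rightarrow> 'a" where
  "erg_v F \<eta> x y \<nu> lam k =
     (1 / (\<Sum>j\<in>good_steps \<eta> x y lam k. lam j)) *\<^sub>R
       (\<Sum>j\<in>good_steps \<eta> x y lam k. lam j *\<^sub>R (F (y j) + \<nu> j))"

definition erg_eps :: "('a::real_inner \<Rightarrow> 'a) \<Rightarrow> real \<Rightarrow> (nat \<Rightarrow> 'a) \<Rightarrow> (nat \<Rightarrow> 'a) \<Rightarrow> (nat \<Rightarrow> 'a) \<Rightarrow> (nat \<Rightarrow> real) \<Rightarrow> nat \<Rightarrow> real" where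
  "erg_eps F \<eta> x y \<nu> lam k =
     (1 / (\<Sum>j\<in>good_steps \<eta> x y lam k. lam j)) *
       (\<Sum>j\<in>good_steps \<eta> x y lam k. lam j *
          inner (y j - erg_y \<eta> x y lam k) (F (y j) + \<nu> j - erg_v F \<eta> x y \<nu> lam k))"

end

(* Algorithm 2 is a large-step hybrid proximal extragradient (HPE) method in which each proximal
   subproblem is handled by one Newton step warm-started at the previous point.  The choice of tau
   keeps that warm start in the region lam L/2 * residual <= theta of quadratic convergence of
   Newton's method, so every Newton step lands in the smaller region with bound theta_hat; on a
   large step (lam ||y - x|| >= eta) this makes (y, F y + nu) an HPE point with relative error
   sigma = 2 theta_hat / (eta L).  The HPE Fejer inequality then bounds the sum of
   ||y_j - x_{j-1}||^2 over large steps by d0^2 / (tau (1 - sigma^2)); with A large steps this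
   gives a residual <= d0^2 / (tau eta (1 - sigma) A) for the best iterate, and, via the
   transportation formula and sum_j lam_j >= eta A^(3/2) / sqrt (sum_j ||y_j - x_{j-1}||^2),
   an O(A^(-3/2)) bound for the ergodic averages.  A small step multiplies lam by 1 / (1 - tau)
   and is only possible while lam^2 ||F y + nu|| < eta + 2 theta_hat / L, so as long as no
   residual is below rho, small steps outnumber large ones by at most the logarithmic term. *)

theory Submission
  imports Defs
begin

lemma
  assumes "0 \<le> \<sigma>h" "\<sigma>h < 1/2" "0 < \<theta>" "\<theta> < (1 - \<sigma>h) * (1 - 2 * \<sigma>h)"
  shows theta_hat_pos: "0 < theta_hat \<sigma>h \<theta>" and theta_hat_less: "theta_hat \<sigma>h \<theta> < \<theta>"
proof -
  have s1: "1 - \<sigma>h > 0" using assms by simp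
  show "0 < theta_hat \<sigma>h \<theta>" unfolding theta_hat_def using assms s1 by (simp add: add_nonneg_pos)
  have "\<sigma>h / (1 - \<sigma>h) + \<theta> / (1 - \<sigma>h)^2 < \<sigma>h / (1 - \<sigma>h) + (1 - \<sigma>h) * (1 - 2 * \<sigma>h) / (1 - \<sigma>h)^2"
    using assms s1 by (simp add: divide_strict_right_mono)
  also have "\<dots> = 1" using s1 by (simp add: power2_eq_square add_divide_distrib[symmetric])
  finally show "theta_hat \<sigma>h \<theta> < \<theta>" unfolding theta_hat_def using assms by simp
qed

text \<open>\<open>tau_param\<close> is the smaller root, in rationalised form, of
  \<open>\<theta> t\<^sup>2 - (2 \<theta> + \<eta> L / 2) t + (\<theta> - theta_hat \<sigma>h \<theta>) = 0\<close>.\<close>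
lemma
  assumes th: "0 < theta_hat \<sigma>h \<theta>" "theta_hat \<sigma>h \<theta> < \<theta>" and "\<eta> > 0" "L > 0"
  shows tau_param_pos: "0 < tau_param \<sigma>h \<theta> \<eta> L"
    and tau_param_less_one: "tau_param \<sigma>h \<theta> \<eta> L < 1"
    and tau_param_root:
      "\<theta> * (1 - tau_param \<sigma>h \<theta> \<eta> L)^2 = theta_hat \<sigma>h \<theta> + tau_param \<sigma>h \<theta> \<eta> L * \<eta> * L / 2"
proof -
  define b where "b = 2 * \<theta> + \<eta> * L / 2"
  define c where "c = \<theta> - theta_hat \<sigma>h \<theta>"
  define s where "s = sqrt (b^2 - 4 * \<theta> * c)"
  define t where "t = tau_param \<sigma>h \<theta> \<eta> L"
  have c: "0 < c" "c < \<theta>" using th by (simp_all add: c_def)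
  have b: "b > 2 * \<theta>" using assms by (simp add: b_def)
  have "4 * \<theta> * c < (2 * \<theta>)^2" using c by (simp add: power2_eq_square)
  also have "\<dots> < b^2" using b c by (intro power_strict_mono) auto
  finally have s: "s > 0" "s^2 = b^2 - 4 * \<theta> * c" by (auto simp: s_def)
  have t: "t = 2 * c / (b + s)"
    unfolding t_def tau_param_def Let_def s_def c_def b_def by simp
  have bs: "b + s > 0" using s b c by simp
  show "0 < tau_param \<sigma>h \<theta> \<eta> L" using t c bs by (simp add: t_def)
  show "tau_param \<sigma>h \<theta> \<eta> L < 1" using t c s b bs by (simp add: t_def)
  have tbs: "t * (b + s) = 2 * c" using t bs by simp
  have "(\<theta> * t^2 - b * t + c) * (b + s)^2
      = \<theta> * (t * (b + s))^2 - b * (t * (b + s)) * (b + s) + c * (b + s)^2"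
    by (simp add: algebra_simps power2_eq_square)
  also have "\<dots> = c * (4 * \<theta> * c - b^2 + s^2)"
    unfolding tbs by (simp add: algebra_simps power2_eq_square)
  also have "\<dots> = 0" using s by simp
  finally have "\<theta> * t^2 = b * t - c" using bs by simp
  then show "\<theta> * (1 - t)^2 = theta_hat \<sigma>h \<theta> + t * \<eta> * L / 2"
    unfolding power2_diff b_def c_def by (simp add: algebra_simps)
qed

section \<open>The Newton step\<close>

lemma has_derivative_within_continuous_on:
  assumes "\<forall>u\<in>C. (F has_derivative F' u) (at u within C)"
  shows "continuous_on C F"
  using assms has_derivative_continuous continuous_on_eq_continuous_within by blast

lemma convex_segment_mem:
  assumes "convex C" "p \<in> C" "q \<in> C" "0 \<le> t" "t \<le> 1"
  shows "p + t *\<^sub>R (q - p) \<in> C"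
proof -
  have "(1 - t) *\<^sub>R p + t *\<^sub>R q \<in> C" using convexD_alt[OF assms] .
  then show ?thesis by (simp add: algebra_simps)
qed

lemma has_vector_derivative_along_segment:
  fixes F :: "'a::real_normed_vector \<Rightarrow> 'b::real_normed_vector"
  assumes C: "convex C" and pC: "p \<in> C" and qC: "q \<in> C"
    and F': "\<forall>u\<in>C. (F has_derivative F' u) (at u within C)" and t: "0 < t" "t < 1"
  shows "((\<lambda>t. F (p + t *\<^sub>R (q - p))) has_vector_derivative F' (p + t *\<^sub>R (q - p)) (q - p)) (at t)"
proof -
  define g where "g = (\<lambda>t::real. p + t *\<^sub>R (q - p))"
  have g_im: "g ` {0<..<1} \<subseteq> C" using convex_segment_mem[OF C pC qC] by (auto simp: g_def)
  have g_deriv: "(g has_derivative (\<lambda>h. h *\<^sub>R (q - p))) (at t within {0<..<1})"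
    unfolding g_def by (auto intro!: derivative_eq_intros)
  have "((\<lambda>t. F (g t)) has_derivative (\<lambda>h. F' (g t) (h *\<^sub>R (q - p)))) (at t within {0<..<1})"
    by (rule has_derivative_in_compose2[OF F'[rule_format] g_im _ g_deriv]) (use t in auto)
  moreover have "linear (F' (g t))"
    using F' convex_segment_mem[OF C pC qC] t by (auto simp: g_def has_derivative_def bounded_linear.linear)
  ultimately show ?thesis
    using at_within_open[of t "{0<..<1}"] t by (simp add: g_def has_vector_derivative_def linear_cmul)
qed

lemma lipschitz_derivative_remainder:
  fixes F :: "'a::real_normed_vector \<Rightarrow> 'a" and F' :: "'a \<Rightarrow> 'a \<Rightarrow>\<^sub>L 'a"
  assumes C: "convex C" and pC: "p \<in> C" and qC: "q \<in> C"
    and F': "\<forall>u\<in>C. (F has_derivative blinfun_apply (F' u)) (at u within C)"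
    and lip: "\<forall>u\<in>C. \<forall>w\<in>C. norm (F' u - F' w) \<le> L * norm (u - w)"
  shows "norm (F q - F p - F' p (q - p)) \<le> L / 2 * norm (q - p)^2"
proof -
  define d where "d = q - p"
  define f where "f = (\<lambda>t. F (p + t *\<^sub>R d) - t *\<^sub>R F' p d)"
  define \<phi> where "\<phi> = (\<lambda>t::real. L / 2 * t^2 * norm d ^ 2)"
  have seg: "p + t *\<^sub>R d \<in> C" if "0 \<le> t" "t \<le> 1" for t
    using convex_segment_mem[OF C pC qC that] by (simp add: d_def)
  have F_cont: "continuous_on C F" using F' by (rule has_derivative_within_continuous_on)
  have seg_cont: "continuous_on {0..1} (\<lambda>t. p + t *\<^sub>R d)" by (intro continuous_intros)
  have f_cont: "continuous_on {0..1} f"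
    unfolding f_def by (intro continuous_intros continuous_on_compose2[OF F_cont seg_cont]) (auto intro: seg)
  have f_deriv: "(f has_vector_derivative (F' (p + t *\<^sub>R d) d - F' p d)) (at t)" if "0 < t" "t < 1" for t
    unfolding f_def d_def
    by (intro has_vector_derivative_diff has_vector_derivative_along_segment[OF C pC qC F' that])
      (auto intro!: derivative_eq_intros)
  have \<phi>_deriv: "(\<phi> has_vector_derivative (L * t * norm d ^ 2)) (at t)" for t
    unfolding \<phi>_def has_vector_derivative_def by (auto intro!: derivative_eq_intros simp: algebra_simps)
  have f'_bound: "norm (F' (p + t *\<^sub>R d) d - F' p d) \<le> L * t * norm d ^ 2" if "0 < t" "t < 1" for t
  proof -
    have "p + t *\<^sub>R d \<in> C" using seg that by simp
    have "norm (F' (p + t *\<^sub>R d) d - F' p d) \<le> norm (F' (p + t *\<^sub>R d) - F' p) * norm d"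
      by (metis blinfun.diff_left norm_blinfun)
    also have "\<dots> \<le> L * norm ((p + t *\<^sub>R d) - p) * norm d"
      by (rule mult_right_mono[OF lip[rule_format, OF \<open>p + t *\<^sub>R d \<in> C\<close> pC]]) simp
    also have "\<dots> = L * t * norm d ^ 2" using that by (simp add: power2_eq_square)
    finally show ?thesis .
  qed
  have "norm (f 1 - f 0) \<le> \<phi> 1 - \<phi> 0"
    by (rule differentiable_bound_general[OF zero_less_one f_cont _ f_deriv \<phi>_deriv f'_bound])
      (simp_all add: \<phi>_def continuous_intros)
  then show ?thesis by (simp add: f_def \<phi>_def d_def algebra_simps)
qed

lemma monotone_derivative_nonneg:
  fixes F :: "'a::real_inner \<Rightarrow> 'a" and F' :: "'a \<Rightarrow> 'a \<Rightarrow>\<^sub>L 'a"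
  assumes C: "convex C" and pC: "p \<in> C" and qC: "q \<in> C"
    and F': "\<forall>u\<in>C. (F has_derivative blinfun_apply (F' u)) (at u within C)"
    and lip: "\<forall>u\<in>C. \<forall>w\<in>C. norm (F' u - F' w) \<le> L * norm (u - w)"
    and mono: "\<forall>u\<in>C. \<forall>w\<in>C. inner (F u - F w) (u - w) \<ge> 0"
  shows "inner (F' p (q - p)) (q - p) \<ge> 0"
proof -
  define d where "d = q - p"
  define a where "a = inner (F' p d) d"
  define K where "K = L / 2 * norm d ^ 3"
  \<comment> \<open>monotonicity along the segment gives \<open>0 \<le> t\<^sup>2 a + O(t\<^sup>3)\<close>; let \<open>t \<rightarrow> 0\<close>\<close>
  have near: "0 \<le> a + t * K" if t: "0 < t" "t < 1" for t
  proof -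
    define R where "R = F (p + t *\<^sub>R d) - F p - F' p (t *\<^sub>R d)"
    have "p + t *\<^sub>R d \<in> C" using convex_segment_mem[OF C pC qC] t by (simp add: d_def)
    then have mono_t: "0 \<le> inner (F (p + t *\<^sub>R d) - F p) (t *\<^sub>R d)"
      using mono pC by force
    have "norm R \<le> L / 2 * norm (t *\<^sub>R d)^2"
      using lipschitz_derivative_remainder[OF C pC \<open>p + t *\<^sub>R d \<in> C\<close> F' lip] by (simp add: R_def)
    then have "norm R * norm d \<le> (L / 2 * norm (t *\<^sub>R d)^2) * norm d" by (rule mult_right_mono) simp
    then have R: "norm R * norm d \<le> t^2 * K"
      using t by (simp add: K_def power2_eq_square power3_eq_cube algebra_simps)
    have "inner (F (p + t *\<^sub>R d) - F p) (t *\<^sub>R d) = t^2 * a + t * inner R d"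
      by (simp add: R_def a_def blinfun.scaleR_right inner_diff_left power2_eq_square algebra_simps)
    also have "\<dots> \<le> t^2 * a + t * (t^2 * K)"
      using t R norm_cauchy_schwarz[of R d] by (intro add_left_mono mult_left_mono) auto
    finally have "0 \<le> t^2 * (a + t * K)" using mono_t by (simp add: algebra_simps power2_eq_square)
    then show ?thesis using t by (simp add: zero_le_mult_iff)
  qed
  have "((\<lambda>t. a + t * K) \<longlongrightarrow> a + 0 * K) (at_right 0)" by (intro tendsto_intros)
  moreover have "\<forall>\<^sub>F t in at_right 0. 0 \<le> a + t * K" by (rule eventually_at_rightI[of 0 1]) (auto intro: near)
  ultimately have "0 \<le> a + 0 * K" using tendsto_lowerbound trivial_limit_at_right_real by blast
  then show ?thesis by (simp add: a_def d_def)
qed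

lemma normal_coneD: "\<nu> \<in> normal_cone C z \<Longrightarrow> z \<in> C \<and> (\<forall>w\<in>C. inner \<nu> (w - z) \<le> 0)"
  unfolding normal_cone_def by (auto split: if_splits)

lemma normal_cone_monotone:
  assumes "\<nu>1 \<in> normal_cone C z1" "\<nu>2 \<in> normal_cone C z2"
  shows "inner (\<nu>1 - \<nu>2) (z1 - z2) \<ge> 0"
proof -
  have "inner \<nu>1 (z2 - z1) \<le> 0" "inner \<nu>2 (z1 - z2) \<le> 0"
    using normal_coneD[OF assms(1)] normal_coneD[OF assms(2)] by blast+
  moreover have "inner (\<nu>1 - \<nu>2) (z1 - z2) = - inner \<nu>1 (z2 - z1) - inner \<nu>2 (z1 - z2)"
    by (simp add: inner_diff_left inner_diff_right)
  ultimately show ?thesis by linarith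
qed

lemma monotone_plus_normal_cone:
  assumes mono: "\<forall>u\<in>C. \<forall>w\<in>C. inner (F u - F w) (u - w) \<ge> 0"
    and "\<nu>1 \<in> normal_cone C z1" "\<nu>2 \<in> normal_cone C z2"
  shows "inner ((F z1 + \<nu>1) - (F z2 + \<nu>2)) (z1 - z2) \<ge> 0"
proof -
  have "inner (F z1 - F z2) (z1 - z2) \<ge> 0" using mono normal_coneD assms(2,3) by blast
  moreover have "inner (\<nu>1 - \<nu>2) (z1 - z2) \<ge> 0" by (rule normal_cone_monotone[OF assms(2,3)])
  ultimately show ?thesis by (simp add: inner_diff_left inner_add_left algebra_simps)
qed

lemma sol_set_iff: "s \<in> sol_set F C \<longleftrightarrow> (\<exists>\<mu>\<in>normal_cone C s. F s + \<mu> = 0)"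
  unfolding sol_set_def FN_op_def by auto

lemma sol_set_eq_variational_inequality:
  "sol_set F C = C \<inter> (\<Inter>w\<in>C. {z \<in> C. 0 \<le> inner (F z) (w - z)})"
proof -
  have "z \<in> sol_set F C \<longleftrightarrow> z \<in> C \<and> (\<forall>w\<in>C. inner (- F z) (w - z) \<le> 0)" for z
    unfolding sol_set_iff normal_cone_def by (auto simp: add_eq_0_iff)
  then show ?thesis by auto
qed

lemma closed_sol_set:
  assumes "closed C" "continuous_on C F"
  shows "closed (sol_set F C)"
proof -
  have "closed {z \<in> C. (\<lambda>_. 0) z \<le> (\<lambda>z. inner (F z) (w - z)) z}" for w
    by (rule continuous_on_closed_Collect_le[OF _ _ assms(1)]) (intro continuous_intros assms(2))+
  then show ?thesis
    unfolding sol_set_eq_variational_inequality by (intro closed_Int assms(1) closed_INT) auto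
qed

lemma newton_step_length:
  fixes A :: "'a::real_inner \<Rightarrow>\<^sub>L 'a"
  assumes n1: "\<nu>' \<in> normal_cone C y'" and n2: "\<nu> \<in> normal_cone C z"
    and pos: "inner (A (z - y')) (z - y') \<ge> 0" and l: "l > 0"
    and err: "norm (l *\<^sub>R (g + A (z - y') + \<nu>) + z - x) \<le> \<sigma>h * norm (z - y')"
  shows "(1 - \<sigma>h) * norm (z - y') \<le> norm (l *\<^sub>R (g + \<nu>') + y' - x)"
proof -
  define w where "w = l *\<^sub>R (g + \<nu>') + y' - x"
  define e where "e = l *\<^sub>R (g + A (z - y') + \<nu>) + z - x"
  define \<delta> where "\<delta> = norm (z - y')"
  have "A (y' - z) = - A (z - y')" by (metis blinfun.minus_right minus_diff_eq)
  then have "w - e = l *\<^sub>R (\<nu>' - \<nu>) + l *\<^sub>R A (y' - z) + (y' - z)"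
    unfolding w_def e_def by (simp add: algebra_simps)
  moreover have "inner (A (y' - z)) (y' - z) = inner (A (z - y')) (z - y')"
    using \<open>A (y' - z) = - A (z - y')\<close> by (metis inner_minus_left inner_minus_right minus_diff_eq minus_minus)
  ultimately have "inner (w - e) (y' - z) = l * inner (\<nu>' - \<nu>) (y' - z) + l * inner (A (z - y')) (z - y') + \<delta>^2"
    unfolding \<delta>_def by (simp add: inner_add_left power2_norm_eq_inner norm_minus_commute)
  moreover have "inner (\<nu>' - \<nu>) (y' - z) \<ge> 0" by (rule normal_cone_monotone[OF n1 n2])
  ultimately have "\<delta>^2 \<le> inner (w - e) (y' - z)" using pos l by simp
  also have "\<dots> \<le> (norm w + norm e) * \<delta>"
    using norm_cauchy_schwarz[of "w - e" "y' - z"] norm_triangle_ineq4[of w e]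
    by (simp add: \<delta>_def norm_minus_commute mult_right_mono order_trans)
  finally have "\<delta> \<le> norm w + norm e"
    by (cases "\<delta> = 0") (auto simp: power2_eq_square \<delta>_def)
  then show ?thesis using err by (simp add: w_def e_def \<delta>_def algebra_simps)
qed

lemma newton_step_true_residual:
  fixes F :: "'a::real_inner \<Rightarrow> 'a" and F' :: "'a \<Rightarrow> 'a \<Rightarrow>\<^sub>L 'a"
  assumes C: "convex C" and y'C: "y' \<in> C" and zC: "z \<in> C"
    and F': "\<forall>u\<in>C. (F has_derivative blinfun_apply (F' u)) (at u within C)"
    and lip: "\<forall>u\<in>C. \<forall>w\<in>C. norm (F' u - F' w) \<le> L * norm (u - w)"
    and l: "l > 0"
    and err: "norm (l *\<^sub>R (F y' + F' y' (z - y') + \<nu>) + z - x) \<le> \<sigma>h * norm (z - y')"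
  shows "norm (l *\<^sub>R (F z + \<nu>) + z - x) \<le> \<sigma>h * norm (z - y') + l * (L / 2 * norm (z - y')^2)"
proof -
  define R where "R = F z - F y' - F' y' (z - y')"
  define e where "e = l *\<^sub>R (F y' + F' y' (z - y') + \<nu>) + z - x"
  have R: "norm R \<le> L / 2 * norm (z - y')^2"
    unfolding R_def by (rule lipschitz_derivative_remainder[OF C y'C zC F' lip])
  have "l *\<^sub>R (F z + \<nu>) + z - x = e + l *\<^sub>R R"
    unfolding R_def e_def by (simp add: algebra_simps)
  then have "norm (l *\<^sub>R (F z + \<nu>) + z - x) \<le> norm e + l * norm R"
    using l by (metis abs_of_pos norm_scaleR norm_triangle_ineq)
  also have "\<dots> \<le> \<sigma>h * norm (z - y') + l * (L / 2 * norm (z - y')^2)"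
    using err R l unfolding e_def by (intro add_mono mult_left_mono) auto
  finally show ?thesis .
qed

lemma newton_step_residual:
  fixes F :: "'a::real_inner \<Rightarrow> 'a" and F' :: "'a \<Rightarrow> 'a \<Rightarrow>\<^sub>L 'a"
  assumes C: "convex C"
    and F': "\<forall>u\<in>C. (F has_derivative blinfun_apply (F' u)) (at u within C)"
    and lip: "\<forall>u\<in>C. \<forall>w\<in>C. norm (F' u - F' w) \<le> L * norm (u - w)"
    and mono: "\<forall>u\<in>C. \<forall>w\<in>C. inner (F u - F w) (u - w) \<ge> 0"
    and n1: "\<nu>' \<in> normal_cone C y'" and n2: "\<nu> \<in> normal_cone C z"
    and l: "l > 0" and L: "L > 0" and \<sigma>h: "0 \<le> \<sigma>h" "\<sigma>h < 1"
    and prev: "l * L / 2 * norm (l *\<^sub>R (F y' + \<nu>') + y' - x) \<le> \<theta>"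
    and err: "norm (l *\<^sub>R (F y' + F' y' (z - y') + \<nu>) + z - x) \<le> \<sigma>h * norm (z - y')"
  shows "l * L / 2 * norm (l *\<^sub>R (F z + \<nu>) + z - x) \<le> theta_hat \<sigma>h \<theta>"
proof -
  have y'C: "y' \<in> C" and zC: "z \<in> C" using normal_coneD[OF n1] normal_coneD[OF n2] by auto
  \<comment> \<open>\<open>theta_hat \<sigma>h \<theta> = \<sigma>h m + m\<^sup>2\<close> for the largest possible value \<open>m = \<theta> / (1 - \<sigma>h)\<close>\<close>
  define m where "m = l * L / 2 * norm (z - y')"
  have "(1 - \<sigma>h) * norm (z - y') \<le> norm (l *\<^sub>R (F y' + \<nu>') + y' - x)"
    by (rule newton_step_length[where g="F y'", OF n1 n2 monotone_derivative_nonneg[OF C y'C zC F' lip mono] l err])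
  then have "(1 - \<sigma>h) * m \<le> \<theta>"
    using prev l L mult_left_mono[of _ _ "l * L / 2"] by (fastforce simp: m_def algebra_simps)
  then have m: "0 \<le> m" "m \<le> \<theta> / (1 - \<sigma>h)"
    using \<sigma>h l L by (simp_all add: m_def field_simps)
  have "l * L / 2 * norm (l *\<^sub>R (F z + \<nu>) + z - x)
      \<le> l * L / 2 * (\<sigma>h * norm (z - y') + l * (L / 2 * norm (z - y')^2))"
    using newton_step_true_residual[OF C y'C zC F' lip l err] l L by (intro mult_left_mono) auto
  also have "\<dots> = \<sigma>h * m + m^2" by (simp add: m_def power2_eq_square algebra_simps)
  also have "\<dots> \<le> \<sigma>h * (\<theta> / (1 - \<sigma>h)) + (\<theta> / (1 - \<sigma>h))^2"
    using m \<sigma>h by (intro add_mono mult_left_mono power_mono) auto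
  also have "\<dots> = theta_hat \<sigma>h \<theta>" unfolding theta_hat_def by (simp add: algebra_simps power2_eq_square)
  finally show ?thesis .
qed

lemma residual_after_stepsize_increase:
  fixes v y x :: "'a::real_normed_vector"
  assumes \<tau>: "0 < \<tau>" "\<tau> < 1" and l: "l > 0" and L: "L > 0"
    and root: "\<theta> * (1 - \<tau>)^2 = \<theta>h + \<tau> * \<eta> * L / 2"
    and res: "l * L / 2 * norm (l *\<^sub>R v + y - x) \<le> \<theta>h"
    and small: "l * norm (y - x) < \<eta>"
  shows "l / (1 - \<tau>) * L / 2 * norm ((l / (1 - \<tau>)) *\<^sub>R v + y - x) \<le> \<theta>"
proof -
  define r where "r = l *\<^sub>R v + y - x"
  have "r - \<tau> *\<^sub>R (y - x) = l *\<^sub>R v + (1 - \<tau>) *\<^sub>R (y - x)" by (simp add: r_def algebra_simps)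
  then have "(l / (1 - \<tau>)) *\<^sub>R v + y - x = (1 / (1 - \<tau>)) *\<^sub>R (r - \<tau> *\<^sub>R (y - x))"
    using \<tau> by (simp add: scaleR_add_right)
  then have "norm ((l / (1 - \<tau>)) *\<^sub>R v + y - x) \<le> (norm r + \<tau> * norm (y - x)) / (1 - \<tau>)"
    using \<tau> norm_triangle_ineq4[of r "\<tau> *\<^sub>R (y - x)"] by (simp add: divide_right_mono)
  then have "l / (1 - \<tau>) * L / 2 * norm ((l / (1 - \<tau>)) *\<^sub>R v + y - x)
      \<le> l / (1 - \<tau>) * L / 2 * ((norm r + \<tau> * norm (y - x)) / (1 - \<tau>))"
    using \<tau> l L by (intro mult_left_mono) auto
  also have "\<dots> = (l * L / 2 * norm r + \<tau> * L / 2 * (l * norm (y - x))) / (1 - \<tau>)^2"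
    using \<tau> by (simp add: power2_eq_square field_simps)
  also have "\<dots> \<le> (\<theta>h + \<tau> * L / 2 * \<eta>) / (1 - \<tau>)^2"
    using res small \<tau> L by (intro divide_right_mono add_mono mult_left_mono) (auto simp: r_def)
  also have "\<dots> = \<theta>" using root \<tau> by (simp add: field_simps)
  finally show ?thesis .
qed

section \<open>Inexact proximal steps\<close>

lemma norm_add_square:
  fixes a b :: "'a::real_inner"
  shows "norm (a + b)^2 = norm a^2 + 2 * inner a b + norm b^2"
  by (simp add: power2_norm_eq_inner inner_add_left inner_add_right inner_commute)

lemma norm_diff_square:
  fixes a b :: "'a::real_inner"
  shows "norm (a - b)^2 = norm a^2 - 2 * inner a b + norm b^2"
  by (simp add: power2_norm_eq_inner inner_diff_left inner_diff_right inner_commute)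

lemma relaxed_step_norm_identity:
  fixes x y v p :: "'a::real_inner" and l t :: real
  defines "r \<equiv> l *\<^sub>R v + y - x" and "e \<equiv> x - y"
  shows "norm (x - (t * l) *\<^sub>R v - p)^2 = norm (x - p)^2 - 2 * t * l * inner (y - p) v
           + t * (norm r^2 - norm e^2) - t * (1 - t) * norm (r + e)^2"
proof -
  have lv: "l *\<^sub>R v = r + e" by (simp add: r_def e_def)
  have "(t * l) *\<^sub>R v = t *\<^sub>R (r + e)" by (simp flip: lv)
  then have step: "x - (t * l) *\<^sub>R v - p = (x - p) - t *\<^sub>R (r + e)" by simp
  have expand: "norm (x - (t * l) *\<^sub>R v - p)^2
      = norm (x - p)^2 - 2 * t * inner (x - p) (r + e) + t^2 * norm (r + e)^2"
    unfolding step by (simp only: norm_diff_square) (simp add: power_mult_distrib)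
  have cross: "inner (x - p) (r + e) = inner e r + norm e^2 + l * inner (y - p) v"
  proof -
    have "x - p = e + (y - p)" by (simp add: e_def)
    then have "inner (x - p) (r + e) = inner e (r + e) + inner (y - p) (l *\<^sub>R v)"
      by (simp only: inner_add_left lv)
    then show ?thesis by (simp add: inner_add_right power2_norm_eq_inner)
  qed
  have square: "norm (r + e)^2 = norm r^2 + 2 * inner e r + norm e^2"
    by (simp add: norm_add_square inner_commute)
  show ?thesis
    by (simp only: expand cross square) (simp add: algebra_simps power2_eq_square)
qed

lemma hpe_step_norm_decrease:
  fixes x y v p :: "'a::real_inner"
  assumes err: "norm (l *\<^sub>R v + y - x) \<le> s * norm (y - x)" and t: "0 \<le> t" "t \<le> 1"
  shows "norm (x - (t * l) *\<^sub>R v - p)^2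
           \<le> norm (x - p)^2 - 2 * t * l * inner (y - p) v - t * (1 - s^2) * norm (y - x)^2"
proof -
  define r where "r = l *\<^sub>R v + y - x"
  define e where "e = x - y"
  have ne: "norm e = norm (y - x)" by (simp add: e_def norm_minus_commute)
  have "norm r^2 \<le> (s * norm e)^2"
    using err ne unfolding r_def by (metis norm_ge_zero power_mono)
  then have "t * (norm r^2 - norm e^2) - t * (1 - t) * norm (r + e)^2 \<le> t * (s^2 * norm e^2 - norm e^2) - 0"
    using t by (intro diff_mono mult_left_mono) (auto simp: power_mult_distrib)
  moreover have "t * (s^2 * norm e^2 - norm e^2) = - (t * (1 - s^2) * norm (y - x)^2)"
    by (simp add: ne algebra_simps)
  moreover have "norm (x - (t * l) *\<^sub>R v - p)^2 = norm (x - p)^2 - 2 * t * l * inner (y - p) v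
           + t * (norm r^2 - norm e^2) - t * (1 - t) * norm (r + e)^2"
    unfolding r_def e_def by (rule relaxed_step_norm_identity)
  ultimately show ?thesis by linarith
qed

lemma hpe_step_dist_bound:
  fixes x y v s0 :: "'a::real_inner"
  assumes err: "norm (l *\<^sub>R v + y - x) \<le> s * norm (y - x)" and "l > 0" "0 \<le> s"
    and sol: "inner v (y - s0) \<ge> 0"
  shows "(1 - s^2) * norm (y - s0)^2 \<le> norm (x - s0)^2"
proof -
  define r where "r = l *\<^sub>R v + y - x"
  define e where "e = x - y"
  define w where "w = y - s0"
  have "inner (r + e) w \<ge> 0"
    using sol \<open>l > 0\<close> by (simp add: r_def e_def w_def)
  moreover have "inner r w \<le> s * norm e * norm w"
    using norm_cauchy_schwarz[of r w] err mult_right_mono[of _ _ "norm w"]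
    by (fastforce simp: r_def e_def norm_minus_commute)
  ultimately have iE: "inner e w \<ge> - (s * norm e * norm w)" by (simp add: inner_add_left)
  have "(1 - s^2) * norm w^2 = norm w^2 - 2 * (s * norm e * norm w) + norm e^2 - (norm e - s * norm w)^2"
    by (simp add: power2_eq_square algebra_simps)
  also have "\<dots> \<le> norm w^2 + 2 * inner e w + norm e^2"
    using iE zero_le_power2[of "norm e - s * norm w"] by linarith
  also have "\<dots> = norm (x - s0)^2"
    using norm_add_square[of w e] by (simp add: w_def e_def inner_commute algebra_simps)
  finally show ?thesis by (simp add: w_def)
qed

lemma norm_square_difference_bound:
  fixes a b c :: "'a::real_inner"
  assumes ab: "norm (b - a) \<le> 2 * D" and ac: "norm (c - a) \<le> (1 + \<kappa>) * D" and "1 \<le> \<kappa>"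
  shows "norm (a - c)^2 - norm (b - c)^2 \<le> 4 * \<kappa> * D^2"
proof -
  define t where "t = norm (b - a)"
  have "norm ((b - a) - (c - a))^2 = t^2 - 2 * inner (b - a) (c - a) + norm (c - a)^2"
    unfolding t_def by (rule norm_diff_square)
  then have "norm (a - c)^2 - norm (b - c)^2 = 2 * inner (b - a) (c - a) - t^2"
    by (simp add: norm_minus_commute)
  also have "\<dots> \<le> 2 * t * ((1 + \<kappa>) * D) - t^2"
    using norm_cauchy_schwarz[of "b - a" "c - a"] ac mult_left_mono[OF ac, of "2 * t"]
    by (simp add: t_def)
  also have "\<dots> = 4 * \<kappa> * D^2 - (t - 2 * D) * (t - 2 * \<kappa> * D)"
    by (simp add: algebra_simps power2_eq_square)
  also have "\<dots> \<le> 4 * \<kappa> * D^2"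
  proof -
    have "D \<ge> 0" using ab norm_ge_zero[of "b - a"] by linarith
    then have "2 * D \<le> 2 * \<kappa> * D" using \<open>1 \<le> \<kappa>\<close> by (simp add: mult_right_mono)
    then show ?thesis using ab by (simp add: t_def mult_nonpos_nonpos)
  qed
  finally show ?thesis .
qed

lemma log_plus_bound_from_power:
  assumes \<tau>: "0 < \<tau>" "\<tau> < 1" and gt: "1 < (1 - \<tau>)^(2 * m) * R"
  shows "2 * \<tau> * m < log_plus R"
proof -
  have pos: "0 < (1 - \<tau>)^(2 * m)" using \<tau> by simp
  then have "R > 0" using gt by (smt (verit) mult_nonneg_nonpos)
  have "0 < ln ((1 - \<tau>)^(2 * m) * R)" using gt by simp
  also have "\<dots> = 2 * m * ln (1 - \<tau>) + ln R" using pos \<open>R > 0\<close> \<tau> by (simp add: ln_mult ln_realpow)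
  also have "\<dots> \<le> 2 * m * (- \<tau>) + ln R"
    using ln_one_minus_pos_upper_bound[of \<tau>] \<tau> by (intro add_right_mono mult_left_mono) auto
  finally show ?thesis by (simp add: log_plus_def less_max_iff_disj algebra_simps)
qed

lemma le_mult_infdist_power:
  fixes x0 :: "'a::metric_space"
  assumes A: "A \<noteq> {}" and c: "c \<ge> 0" and bound: "\<forall>s\<in>A. Q \<le> c * dist x0 s ^ p"
  shows "Q \<le> c * infdist x0 A ^ p"
proof -
  have "Q \<le> c * t ^ p" if t: "infdist x0 A < t" for t
  proof -
    have "bdd_below ((\<lambda>s. dist x0 s) ` A)" by (rule bdd_belowI2[of _ 0]) simp
    then obtain s where s: "s \<in> A" "dist x0 s < t"
      using t cINF_less_iff[OF A, of "dist x0"] by (auto simp: infdist_notempty[OF A])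
    then have "Q \<le> c * dist x0 s ^ p" using bound by blast
    also have "\<dots> \<le> c * t ^ p" using s c by (intro mult_left_mono power_mono) auto
    finally show ?thesis .
  qed
  then have "\<forall>\<^sub>F t in at_right (infdist x0 A). Q \<le> c * t ^ p"
    by (rule eventually_mono[OF eventually_at_right_less])
  moreover have "((\<lambda>t. c * t ^ p) \<longlongrightarrow> c * infdist x0 A ^ p) (at_right (infdist x0 A))"
    by (intro tendsto_intros)
  ultimately show ?thesis using tendsto_lowerbound trivial_limit_at_right_real by blast
qed

text \<open>The identity behind the transportation formula for \<open>\<epsilon>\<close>-enlargements.\<close>
lemma weighted_mean_inner_decomposition:
  fixes Y V :: "'i \<Rightarrow> 'a::real_inner" and w :: "'i \<Rightarrow> real"
  assumes "finite G" and pos: "(\<Sum>j\<in>G. w j) > 0"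
  defines "S \<equiv> (\<Sum>j\<in>G. w j)"
  defines "yb \<equiv> (1 / S) *\<^sub>R (\<Sum>j\<in>G. w j *\<^sub>R Y j)" and "vb \<equiv> (1 / S) *\<^sub>R (\<Sum>j\<in>G. w j *\<^sub>R V j)"
  defines "eb \<equiv> (1 / S) * (\<Sum>j\<in>G. w j * inner (Y j - yb) (V j - vb))"
  shows "inner (vb - u) (yb - z) = (1 / S) * (\<Sum>j\<in>G. w j * inner (V j - u) (Y j - z)) - eb"
proof -
  have Sp: "S > 0" using pos by (simp add: S_def)
  have centre: "(\<Sum>j\<in>G. w j *\<^sub>R (X j - c)) = (\<Sum>j\<in>G. w j *\<^sub>R X j) - S *\<^sub>R c"
    for X :: "'i \<Rightarrow> 'a" and c
    by (simp add: scaleR_diff_right sum_subtractf S_def scaleR_sum_left)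
  have sY: "(\<Sum>j\<in>G. w j *\<^sub>R (Y j - yb)) = 0" and sV: "(\<Sum>j\<in>G. w j *\<^sub>R (V j - vb)) = 0"
    unfolding centre using Sp by (simp_all add: yb_def vb_def)
  have summand: "w j * inner (V j - u) (Y j - z) =
      w j * inner (Y j - yb) (V j - vb) + inner (w j *\<^sub>R (V j - vb)) (yb - z)
      + inner (vb - u) (w j *\<^sub>R (Y j - yb)) + w j * inner (vb - u) (yb - z)" for j
  proof -
    have "V j - u = (V j - vb) + (vb - u)" "Y j - z = (Y j - yb) + (yb - z)" by simp_all
    then have "inner (V j - u) (Y j - z) = inner (V j - vb) (Y j - yb) + inner (V j - vb) (yb - z)
       + inner (vb - u) (Y j - yb) + inner (vb - u) (yb - z)"
      by (metis inner_add_left inner_add_right add.assoc)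
    then show ?thesis by (simp add: algebra_simps inner_commute)
  qed
  have "(\<Sum>j\<in>G. w j * inner (V j - u) (Y j - z)) =
      (\<Sum>j\<in>G. w j * inner (Y j - yb) (V j - vb)) + inner (\<Sum>j\<in>G. w j *\<^sub>R (V j - vb)) (yb - z)
      + inner (vb - u) (\<Sum>j\<in>G. w j *\<^sub>R (Y j - yb)) + S * inner (vb - u) (yb - z)"
    unfolding summand by (simp add: sum.distrib inner_sum_left inner_sum_right S_def sum_distrib_right)
  also have "\<dots> = S * eb + S * inner (vb - u) (yb - z)"
    unfolding sV sY using Sp by (simp add: eb_def)
  finally show ?thesis using Sp by (simp add: field_simps)
qed

lemma card_cube_le_sum_inverse_square_mult_sum_square:
  fixes a :: "'i \<Rightarrow> real"
  assumes "finite G" and pos: "\<forall>j\<in>G. a j > 0"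
  shows "real (card G)^3 \<le> (\<Sum>j\<in>G. 1 / a j)^2 * (\<Sum>j\<in>G. a j^2)"
proof (cases "G = {}")
  case False
  define n where "n = real (card G)"
  define E where "E = (\<Sum>j\<in>G. a j^2)"
  have n: "n > 0" using False \<open>finite G\<close> by (simp add: n_def card_gt_0_iff)
  have E: "E > 0" unfolding E_def using False \<open>finite G\<close> pos by (intro sum_pos) auto
  \<comment> \<open>tangent line of \<open>1 / a\<close> in the variable \<open>a\<^sup>2\<close>: \<open>(s a - 1)\<^sup>2 (s a + 2) \<ge> 0\<close>\<close>
  have tangent: "3 / 2 * s - s^3 / 2 * b^2 \<le> 1 / b" if "b > 0" "s > 0" for b s :: real
  proof -
    have "0 \<le> (s * b - 1)^2 * (s * b + 2)" using that by simp
    then have "(3 / 2 * s - s^3 / 2 * b^2) * b \<le> 1"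
      by (simp add: power2_eq_square power3_eq_cube algebra_simps)
    then show ?thesis using that by (simp add: field_simps)
  qed
  define s where "s = sqrt (n / E)"
  have s: "s > 0" "s^2 * E = n" using n E by (simp_all add: s_def)
  have "(\<Sum>j\<in>G. 3 / 2 * s - s^3 / 2 * a j^2) \<le> (\<Sum>j\<in>G. 1 / a j)"
    using pos s by (intro sum_mono tangent) auto
  moreover have "(\<Sum>j\<in>G. 3 / 2 * s - s^3 / 2 * a j^2) = 3 / 2 * s * n - s * (s^2 * E) / 2"
    by (simp add: sum_subtractf sum_distrib_left n_def E_def power3_eq_cube power2_eq_square algebra_simps)
  moreover have "3 / 2 * s * n - s * (s^2 * E) / 2 = s * n" using s by simp
  ultimately have "s * n \<le> (\<Sum>j\<in>G. 1 / a j)" by simp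
  then have "(s * n)^2 * E \<le> (\<Sum>j\<in>G. 1 / a j)^2 * E"
    using s n E by (intro mult_right_mono power_mono) auto
  moreover have "(s * n)^2 * E = n^3" using s by (simp add: power_mult_distrib power3_eq_cube power2_eq_square algebra_simps)
  ultimately show ?thesis by (simp add: n_def E_def)
qed simp

lemma le_of_square_mult_bounds:
  fixes A E S Q \<eta> \<tau> \<rho> :: real
  assumes "0 < E" "0 < S" "0 \<le> Q" "0 < \<tau>" "0 < \<rho>"
    and S_bound: "\<eta>^2 * A^3 \<le> S^2 * E" and Q_bound: "Q^2 * E \<le> (\<tau> * \<rho> * \<eta>)^2 * A^3"
  shows "Q / (\<tau> * S) \<le> \<rho>"
proof -
  have "Q^2 * E \<le> (\<tau> * \<rho>)^2 * (\<eta>^2 * A^3)" using Q_bound by (simp add: power_mult_distrib)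
  also have "\<dots> \<le> (\<tau> * \<rho>)^2 * (S^2 * E)" using S_bound by (intro mult_left_mono) auto
  finally have "Q^2 \<le> (\<tau> * \<rho> * S)^2" using \<open>0 < E\<close> by (simp add: power_mult_distrib)
  then have "Q \<le> \<tau> * \<rho> * S" using assms by (simp add: power2_le_iff_abs_le)
  then show ?thesis using assms by (simp add: divide_le_eq algebra_simps)
qed

lemma powr_cube: "0 < (z::real) \<Longrightarrow> (z powr r)^3 = z powr (3 * r)"
  by (simp add: powr_power)

lemma complexity_constant_cube:
  fixes \<tau> \<eta> w z p :: real
  assumes "0 < \<tau>" "0 < \<eta>" "0 < w" "0 < z"
  shows "(2 * root 3 4 / (\<tau> * \<eta> powr (2/3) * w powr p) * z powr (2/3) / 2)^3
    = 4 * z^2 / (\<tau>^3 * \<eta>^2 * w powr (3 * p))"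
proof -
  have "(root 3 4 :: real)^3 = 4" by (rule real_root_pow_pos2) auto
  moreover have "(\<eta> powr (2/3))^3 = \<eta>^2" "(z powr (2/3))^3 = z^2" "(w powr p)^3 = w powr (3 * p)"
    using assms by (simp_all add: powr_cube powr_numeral)
  ultimately show ?thesis by (simp add: power_mult_distrib power_divide)
qed

section \<open>Trajectories of Algorithm 2\<close>

locale alg2_trajectory =
  fixes F :: "'a::real_inner \<Rightarrow> 'a" and F' :: "'a \<Rightarrow> 'a \<Rightarrow>\<^sub>L 'a" and C :: "'a set"
    and L \<sigma>h \<theta> \<eta> :: real and x y \<nu> :: "nat \<Rightarrow> 'a" and lam :: "nat \<Rightarrow> real"
  assumes C_convex: "convex C"
    and F_mono: "\<forall>u\<in>C. \<forall>w\<in>C. inner (F u - F w) (u - w) \<ge> 0"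
    and F_deriv: "\<forall>u\<in>C. (F has_derivative blinfun_apply (F' u)) (at u within C)"
    and L_pos: "L > 0"
    and F'_lip: "\<forall>u\<in>C. \<forall>w\<in>C. norm (F' u - F' w) \<le> L * norm (u - w)"
    and \<sigma>h: "0 \<le> \<sigma>h" "\<sigma>h < 1/2"
    and \<theta>: "0 < \<theta>" "\<theta> < (1 - \<sigma>h) * (1 - 2 * \<sigma>h)"
    and \<eta>_gt: "\<eta> > 2 * theta_hat \<sigma>h \<theta> / L"
    and run: "alg2_run F F' C L \<sigma>h \<theta> \<eta> x y \<nu> lam"
begin

abbreviation "\<theta>h \<equiv> theta_hat \<sigma>h \<theta>"
abbreviation "\<tau> \<equiv> tau_param \<sigma>h \<theta> \<eta> L"
abbreviation "\<sigma> \<equiv> 2 * \<theta>h / (\<eta> * L)"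
abbreviation v where "v k \<equiv> F (y k) + \<nu> k"

text \<open>Iteration \<open>Suc n\<close> of Algorithm 2 computes \<open>y (Suc n)\<close> and \<open>x (Suc n)\<close> from \<open>x n\<close> with
  stepsize \<open>lam (Suc n)\<close>.\<close>
abbreviation large_step where "large_step n \<equiv> \<eta> \<le> lam (Suc n) * norm (y (Suc n) - x n)"
abbreviation large_steps where "large_steps k \<equiv> good_steps \<eta> x y lam k"
abbreviation num_large where "num_large k \<equiv> card (large_steps k)"
abbreviation "\<Lambda> \<equiv> \<eta> + 2 * \<theta>h / L"
abbreviation lam_sum where "lam_sum k \<equiv> \<Sum>j\<in>large_steps k. lam j"
abbreviation d0 where "d0 \<equiv> infdist (x 0) (sol_set F C)"
abbreviation log_term where "log_term \<rho> \<equiv> nat \<lceil>1 / (2 * \<tau>) * log_plus (\<Lambda> / ((lam 1)^2 * \<rho>))\<rceil>"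

lemma
  shows \<theta>h_less: "\<theta>h < \<theta>" and \<eta>_pos: "0 < \<eta>"
    and \<tau>_pos: "0 < \<tau>" and \<tau>_less_one: "\<tau> < 1" and \<tau>_root: "\<theta> * (1 - \<tau>)^2 = \<theta>h + \<tau> * \<eta> * L / 2"
    and \<sigma>_pos: "0 < \<sigma>" and \<sigma>_less_one: "\<sigma> < 1"
proof -
  have th: "0 < \<theta>h" "\<theta>h < \<theta>" using theta_hat_pos[OF \<sigma>h \<theta>] theta_hat_less[OF \<sigma>h \<theta>] by auto
  then show "\<theta>h < \<theta>" by simp
  have "0 < 2 * \<theta>h / L" using th L_pos by simp
  then show \<eta>: "0 < \<eta>" using \<eta>_gt by linarith
  show "0 < \<tau>" "\<tau> < 1" "\<theta> * (1 - \<tau>)^2 = \<theta>h + \<tau> * \<eta> * L / 2"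
    using tau_param_pos[OF th \<eta> L_pos] tau_param_less_one[OF th \<eta> L_pos] tau_param_root[OF th \<eta> L_pos]
    by auto
  show "0 < \<sigma>" using th \<eta> L_pos by simp
  show "\<sigma> < 1" using \<eta>_gt \<eta> L_pos by (simp add: field_simps)
qed

lemma run_start:
  shows "x 0 \<in> C" "y 0 = x 0" "\<nu> 0 = 0" "lam 1 > 0" "(lam 1)^2 * norm (F (y 0)) \<le> 2 * \<theta> / L"
  using run unfolding alg2_run_def Let_def by auto

lemma v_nonzero: "v k \<noteq> 0"
  using run unfolding alg2_run_def Let_def by auto

lemma run_step:
  "(if lam (Suc n) * L / 2 * norm (lam (Suc n) *\<^sub>R v n + y n - x n) \<le> \<theta>h
    then y (Suc n) = y n \<and> \<nu> (Suc n) = \<nu> n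
    else \<nu> (Suc n) \<in> normal_cone C (y (Suc n)) \<and>
      norm (lam (Suc n) *\<^sub>R (F (y n) + F' (y n) (y (Suc n) - y n) + \<nu> (Suc n)) + y (Suc n) - x n)
        \<le> \<sigma>h * norm (y (Suc n) - y n)) \<and>
   (if large_step n
    then x (Suc n) = x n - (\<tau> * lam (Suc n)) *\<^sub>R v (Suc n) \<and> lam (Suc (Suc n)) = (1 - \<tau>) * lam (Suc n)
    else x (Suc n) = x n \<and> lam (Suc (Suc n)) = lam (Suc n) / (1 - \<tau>))"
proof -
  have "1 \<le> Suc n" by simp
  with run show ?thesis unfolding alg2_run_def Let_def
    by (elim conjE allE[of _ "Suc n"] impE) (simp_all only: diff_Suc_1 Suc_eq_plus1[symmetric])
qed

lemma newton_skipped: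
  "lam (Suc n) * L / 2 * norm (lam (Suc n) *\<^sub>R v n + y n - x n) \<le> \<theta>h \<Longrightarrow> y (Suc n) = y n \<and> \<nu> (Suc n) = \<nu> n"
  using run_step[of n] by auto

lemma newton_solved:
  "\<not> lam (Suc n) * L / 2 * norm (lam (Suc n) *\<^sub>R v n + y n - x n) \<le> \<theta>h \<Longrightarrow>
    \<nu> (Suc n) \<in> normal_cone C (y (Suc n)) \<and>
    norm (lam (Suc n) *\<^sub>R (F (y n) + F' (y n) (y (Suc n) - y n) + \<nu> (Suc n)) + y (Suc n) - x n)
      \<le> \<sigma>h * norm (y (Suc n) - y n)"
  using run_step[of n] by auto

lemma large_step_update:
  "large_step n \<Longrightarrow>
    x (Suc n) = x n - (\<tau> * lam (Suc n)) *\<^sub>R v (Suc n) \<and> lam (Suc (Suc n)) = (1 - \<tau>) * lam (Suc n)"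
  using run_step[of n] by auto

lemma small_step_update:
  "\<not> large_step n \<Longrightarrow> x (Suc n) = x n \<and> lam (Suc (Suc n)) = lam (Suc n) / (1 - \<tau>)"
  using run_step[of n] by auto

text \<open>The warm start \<open>(y n, \<nu> n)\<close> of the next Newton step lies in its region of quadratic
  convergence.\<close>
definition newton_region :: "nat \<Rightarrow> bool" where
  "newton_region n \<longleftrightarrow> lam (Suc n) > 0 \<and> \<nu> n \<in> normal_cone C (y n) \<and>
     lam (Suc n) * L / 2 * norm (lam (Suc n) *\<^sub>R v n + y n - x n) \<le> \<theta>"

lemma newton_region_residual:
  assumes "newton_region n"
  shows "\<nu> (Suc n) \<in> normal_cone C (y (Suc n)) \<and>
    lam (Suc n) * L / 2 * norm (lam (Suc n) *\<^sub>R v (Suc n) + y (Suc n) - x n) \<le> \<theta>h"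
proof (cases "lam (Suc n) * L / 2 * norm (lam (Suc n) *\<^sub>R v n + y n - x n) \<le> \<theta>h")
  case True
  then show ?thesis using newton_skipped assms unfolding newton_region_def by simp
next
  case False
  note solved = newton_solved[OF False]
  have "lam (Suc n) * L / 2 * norm (lam (Suc n) *\<^sub>R v (Suc n) + y (Suc n) - x n) \<le> \<theta>h"
    by (rule newton_step_residual[OF C_convex F_deriv F'_lip F_mono _ conjunct1[OF solved] _ L_pos
          _ _ _ conjunct2[OF solved]])
      (use assms \<sigma>h in \<open>auto simp: newton_region_def\<close>)
  then show ?thesis using solved by simp
qed

lemma newton_region_Suc:
  assumes "newton_region n"
  shows "newton_region (Suc n)"
proof -
  define l where "l = lam (Suc n)"
  have l: "l > 0" using assms by (simp add: newton_region_def l_def)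
  have \<nu>: "\<nu> (Suc n) \<in> normal_cone C (y (Suc n))"
    and res: "l * L / 2 * norm (l *\<^sub>R v (Suc n) + y (Suc n) - x n) \<le> \<theta>h"
    using newton_region_residual[OF assms] by (simp_all add: l_def)
  show ?thesis
  proof (cases "large_step n")
    case True
    then have x: "x (Suc n) = x n - (\<tau> * l) *\<^sub>R v (Suc n)" and lam: "lam (Suc (Suc n)) = (1 - \<tau>) * l"
      using large_step_update by (simp_all add: l_def)
    have same: "lam (Suc (Suc n)) *\<^sub>R v (Suc n) + y (Suc n) - x (Suc n) = l *\<^sub>R v (Suc n) + y (Suc n) - x n"
      unfolding x lam by (simp add: algebra_simps)
    have "lam (Suc (Suc n)) * L / 2 * norm (lam (Suc (Suc n)) *\<^sub>R v (Suc n) + y (Suc n) - x (Suc n))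
        = (1 - \<tau>) * (l * L / 2 * norm (l *\<^sub>R v (Suc n) + y (Suc n) - x n))"
      unfolding same by (simp add: lam)
    also have "\<dots> \<le> l * L / 2 * norm (l *\<^sub>R v (Suc n) + y (Suc n) - x n)"
      using l L_pos \<tau>_pos \<tau>_less_one by (intro mult_left_le_one_le) auto
    also have "\<dots> \<le> \<theta>" using res \<theta>h_less by linarith
    finally show ?thesis
      using \<nu> l \<tau>_less_one by (simp add: newton_region_def lam)
  next
    case False
    then have "x (Suc n) = x n" "lam (Suc (Suc n)) = l / (1 - \<tau>)"
      using small_step_update by (simp_all add: l_def)
    moreover have "l / (1 - \<tau>) * L / 2 * norm ((l / (1 - \<tau>)) *\<^sub>R v (Suc n) + y (Suc n) - x n) \<le> \<theta>"
      using residual_after_stepsize_increase[OF \<tau>_pos \<tau>_less_one l L_pos \<tau>_root res] False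
      by (simp add: l_def)
    ultimately show ?thesis
      using \<nu> l \<tau>_less_one by (simp add: newton_region_def)
  qed
qed

lemma newton_region_all: "newton_region n"
proof (induction n)
  case 0
  have "lam 1 * L / 2 * norm (lam 1 *\<^sub>R v 0 + y 0 - x 0) = (lam 1)^2 * norm (F (y 0)) * L / 2"
    using run_start by (simp add: power2_eq_square)
  also have "\<dots> \<le> \<theta>" using run_start(5) L_pos by (simp add: field_simps)
  finally show ?case unfolding newton_region_def using run_start by (simp add: normal_cone_def)
next
  case (Suc n)
  then show ?case by (rule newton_region_Suc)
qed

lemma lam_pos: "lam (Suc n) > 0"
  using newton_region_all unfolding newton_region_def by simp

lemma \<nu>_normal_cone: "\<nu> n \<in> normal_cone C (y n)"
  using newton_region_all unfolding newton_region_def by simp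

lemma residual_le_\<theta>h: "lam (Suc n) * L / 2 * norm (lam (Suc n) *\<^sub>R v (Suc n) + y (Suc n) - x n) \<le> \<theta>h"
  using newton_region_residual[OF newton_region_all] by simp

lemma large_step_relative_error:
  assumes "large_step n"
  shows "norm (lam (Suc n) *\<^sub>R v (Suc n) + y (Suc n) - x n) \<le> \<sigma> * norm (y (Suc n) - x n)"
proof -
  define r where "r = norm (lam (Suc n) *\<^sub>R v (Suc n) + y (Suc n) - x n)"
  define e where "e = norm (y (Suc n) - x n)"
  have "r * (\<eta> * L) \<le> r * (lam (Suc n) * e * L)"
    using assms L_pos by (intro mult_left_mono) (auto simp: r_def e_def)
  also have "\<dots> = 2 * e * (lam (Suc n) * L / 2 * r)" by (simp add: algebra_simps)
  also have "\<dots> \<le> 2 * e * \<theta>h" using residual_le_\<theta>h[of n] by (intro mult_left_mono) (auto simp: r_def e_def)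
  finally show ?thesis using \<eta>_pos L_pos by (simp add: r_def e_def field_simps)
qed

lemma one_minus_\<sigma>_sq_pos: "0 < 1 - \<sigma>^2"
  using \<sigma>_pos \<sigma>_less_one by (simp add: power_less_one_iff abs_less_iff)

lemma solution_inner_nonneg:
  assumes "s \<in> sol_set F C"
  shows "inner (v k) (y k - s) \<ge> 0"
proof -
  obtain \<mu> where "\<mu> \<in> normal_cone C s" "F s + \<mu> = 0" using assms sol_set_iff by blast
  then show ?thesis using monotone_plus_normal_cone[OF F_mono \<nu>_normal_cone] by force
qed

lemma large_step_norm_decrease:
  assumes "large_step n"
  shows "norm (x (Suc n) - p)^2 \<le> norm (x n - p)^2 - 2 * \<tau> * lam (Suc n) * inner (y (Suc n) - p) (v (Suc n))
           - \<tau> * (1 - \<sigma>^2) * norm (y (Suc n) - x n)^2"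
  using hpe_step_norm_decrease[OF large_step_relative_error[OF assms], of \<tau> p]
    \<tau>_pos \<tau>_less_one large_step_update[OF assms] by simp

lemma large_step_dist_bound:
  assumes "large_step n" "s \<in> sol_set F C"
  shows "(1 - \<sigma>^2) * norm (y (Suc n) - s)^2 \<le> norm (x n - s)^2"
  using hpe_step_dist_bound[OF large_step_relative_error[OF assms(1)] lam_pos _
      solution_inner_nonneg[OF assms(2)]] \<sigma>_pos by simp

lemma large_steps_Suc:
  "large_steps (Suc k) = large_steps k \<union> (if large_step k then {Suc k} else {})"
  unfolding good_steps_def by (auto simp: le_Suc_eq)

lemma Suc_notin_large_steps: "Suc k \<notin> large_steps k"
  unfolding good_steps_def by auto

lemma finite_large_steps: "finite (large_steps k)"
  unfolding good_steps_def by auto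

lemma large_steps_subset: "large_steps k \<subseteq> {1..k}"
  unfolding good_steps_def by auto

lemma large_stepsE:
  assumes "j \<in> large_steps k"
  obtains n where "j = Suc n" "n < k" "large_step n"
  using assms unfolding good_steps_def by (cases j) auto

lemma lam_large_steps_pos: "j \<in> large_steps k \<Longrightarrow> lam j > 0"
  by (metis large_stepsE lam_pos)

lemma x_telescope: "x k = x 0 - (\<Sum>j\<in>large_steps k. (\<tau> * lam j) *\<^sub>R v j)"
proof (induction k)
  case 0
  then show ?case by (simp add: good_steps_def)
next
  case (Suc k)
  show ?case
  proof (cases "large_step k")
    case True
    have "x (Suc k) = x k - (\<tau> * lam (Suc k)) *\<^sub>R v (Suc k)" using large_step_update[OF True] by blast
    also have "\<dots> = x 0 - ((\<Sum>j\<in>large_steps k. (\<tau> * lam j) *\<^sub>R v j) + (\<tau> * lam (Suc k)) *\<^sub>R v (Suc k))"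
      unfolding Suc.IH by (simp only: diff_diff_eq)
    also have "\<dots> = x 0 - (\<Sum>j\<in>large_steps (Suc k). (\<tau> * lam j) *\<^sub>R v j)"
      using True Suc_notin_large_steps[of k] finite_large_steps[of k] by (simp add: large_steps_Suc add.commute)
    finally show ?thesis .
  next
    case False
    then show ?thesis using Suc small_step_update[OF False] by (simp add: large_steps_Suc)
  qed
qed

lemma norm_decrease_telescope:
  "norm (x k - p)^2 + (\<Sum>j\<in>large_steps k. 2 * \<tau> * lam j * inner (y j - p) (v j)
      + \<tau> * (1 - \<sigma>^2) * norm (y j - x (j - 1))^2) \<le> norm (x 0 - p)^2"
proof (induction k)
  case 0
  then show ?case by (simp add: good_steps_def)
next
  case (Suc k)
  show ?case
  proof (cases "large_step k")
    case True
    then show ?thesis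
      using Suc large_step_norm_decrease[OF True, of p] Suc_notin_large_steps[of k] finite_large_steps[of k]
      by (simp add: large_steps_Suc)
  next
    case False
    then show ?thesis using Suc small_step_update[OF False] by (simp add: large_steps_Suc)
  qed
qed

lemma large_step_inner_solution_nonneg:
  "j \<in> large_steps k \<Longrightarrow> s \<in> sol_set F C \<Longrightarrow> 0 \<le> 2 * \<tau> * lam j * inner (y j - s) (v j)"
  using lam_large_steps_pos[of j k] solution_inner_nonneg[of s j] \<tau>_pos by (simp add: inner_commute)

lemma dist_solution_mono:
  assumes "s \<in> sol_set F C"
  shows "norm (x k - s) \<le> norm (x 0 - s)"
proof -
  have "0 \<le> (\<Sum>j\<in>large_steps k. 2 * \<tau> * lam j * inner (y j - s) (v j)
      + \<tau> * (1 - \<sigma>^2) * norm (y j - x (j - 1))^2)"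
  proof (rule sum_nonneg)
    fix j assume "j \<in> large_steps k"
    then show "0 \<le> 2 * \<tau> * lam j * inner (y j - s) (v j) + \<tau> * (1 - \<sigma>^2) * norm (y j - x (j - 1))^2"
      using large_step_inner_solution_nonneg[OF _ assms] \<tau>_pos one_minus_\<sigma>_sq_pos
      by (intro add_nonneg_nonneg) auto
  qed
  then have "norm (x k - s)^2 \<le> norm (x 0 - s)^2"
    using norm_decrease_telescope[of k s] by linarith
  then show ?thesis by (simp add: power_mono_iff)
qed

lemma sum_large_step_lengths_bound:
  assumes "s \<in> sol_set F C"
  shows "\<tau> * (1 - \<sigma>^2) * (\<Sum>j\<in>large_steps k. norm (y j - x (j - 1))^2) \<le> norm (x 0 - s)^2"
proof -
  have "0 \<le> (\<Sum>j\<in>large_steps k. 2 * \<tau> * lam j * inner (y j - s) (v j))"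
    using large_step_inner_solution_nonneg[OF _ assms] by (intro sum_nonneg)
  moreover have "(\<Sum>j\<in>large_steps k. 2 * \<tau> * lam j * inner (y j - s) (v j)
      + \<tau> * (1 - \<sigma>^2) * norm (y j - x (j - 1))^2)
    = (\<Sum>j\<in>large_steps k. 2 * \<tau> * lam j * inner (y j - s) (v j))
      + \<tau> * (1 - \<sigma>^2) * (\<Sum>j\<in>large_steps k. norm (y j - x (j - 1))^2)"
    by (simp add: sum.distrib sum_distrib_left)
  ultimately show ?thesis
    using norm_decrease_telescope[of k s] zero_le_power2[of "norm (x k - s)"] by linarith
qed

lemma large_step_v_bound:
  assumes "j \<in> large_steps k"
  shows "\<eta> * norm (v j) \<le> (1 + \<sigma>) * norm (y j - x (j - 1))^2"
proof -
  obtain n where n: "j = Suc n" "large_step n" using large_stepsE[OF assms] by blast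
  define l where "l = lam j"
  define e where "e = norm (y j - x (j - 1))"
  have l: "l > 0" using lam_pos n by (simp add: l_def)
  have "l * norm (v j) \<le> norm (l *\<^sub>R v j + y j - x (j - 1)) + e"
    using l norm_triangle_ineq4[of "l *\<^sub>R v j + y j - x (j - 1)" "y j - x (j - 1)"]
    by (simp add: e_def)
  also have "\<dots> \<le> (1 + \<sigma>) * e"
    using large_step_relative_error[OF n(2)] n by (simp add: l_def e_def algebra_simps)
  finally have lv: "l * norm (v j) \<le> (1 + \<sigma>) * e" .
  have "\<eta> * norm (v j) \<le> (l * e) * norm (v j)"
    using n by (intro mult_right_mono) (auto simp: l_def e_def)
  also have "\<dots> = (l * norm (v j)) * e" by (simp add: algebra_simps)
  also have "\<dots> \<le> ((1 + \<sigma>) * e) * e" using lv by (intro mult_right_mono) (auto simp: e_def)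
  finally show ?thesis by (simp add: e_def power2_eq_square)
qed

lemma num_large_le: "num_large k \<le> k"
  using card_mono[OF _ large_steps_subset[of k]] by simp

lemma num_large_Suc: "num_large (Suc k) = num_large k + (if large_step k then 1 else 0)"
  using Suc_notin_large_steps[of k] finite_large_steps[of k] by (simp add: large_steps_Suc)

lemma lam_balance: "lam (Suc k) * (1 - \<tau>)^(k - num_large k) = lam 1 * (1 - \<tau>)^(num_large k)"
proof (induction k)
  case 0
  then show ?case by (simp add: good_steps_def)
next
  case (Suc k)
  show ?case
  proof (cases "large_step k")
    case True
    then show ?thesis
      using Suc.IH large_step_update[OF True] num_large_Suc[of k] by simp
  next
    case False
    then have "Suc k - num_large (Suc k) = Suc (k - num_large k)"
      using num_large_Suc[of k] num_large_le[of k] by simp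
    then show ?thesis
      using Suc.IH small_step_update[OF False] num_large_Suc[of k] False \<tau>_less_one by simp
  qed
qed

lemma small_step_lam_bound:
  assumes "\<not> large_step n"
  shows "lam (Suc n)^2 * norm (v (Suc n)) < \<Lambda>"
proof -
  define l where "l = lam (Suc n)"
  define r where "r = l *\<^sub>R v (Suc n) + y (Suc n) - x n"
  have l: "l > 0" using lam_pos by (simp add: l_def)
  have "l * norm r \<le> 2 * \<theta>h / L"
    using residual_le_\<theta>h[of n] L_pos by (simp add: l_def r_def field_simps)
  moreover have "l * norm (y (Suc n) - x n) < \<eta>" using assms by (simp add: l_def)
  moreover have "l * norm (v (Suc n)) \<le> norm r + norm (y (Suc n) - x n)"
    using l norm_triangle_ineq4[of r "y (Suc n) - x n"] by (simp add: r_def)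
  then have "l * (l * norm (v (Suc n))) \<le> l * norm r + l * norm (y (Suc n) - x n)"
    using l by (simp add: distrib_left[symmetric] mult_left_mono)
  ultimately show ?thesis by (simp add: l_def power2_eq_square algebra_simps)
qed

lemma small_step_excess:
  assumes small: "\<not> large_step n" and big: "norm (v (Suc n)) > \<rho>" and "\<rho> > 0"
  shows "real (n - num_large n) - real (num_large n) < log_plus (\<Lambda> / ((lam 1)^2 * \<rho>)) / (2 * \<tau>)"
proof (cases "num_large n \<le> n - num_large n")
  case True
  define m where "m = n - num_large n - num_large n"
  have "(1 - \<tau>)^(n - num_large n) = (1 - \<tau>)^(num_large n) * (1 - \<tau>)^m"
    using True by (simp add: m_def power_add[symmetric])
  then have lam1: "lam 1 = lam (Suc n) * (1 - \<tau>)^m"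
    using lam_balance[of n] \<tau>_less_one by (simp add: algebra_simps)
  have "lam (Suc n)^2 * \<rho> < \<Lambda>"
    using small_step_lam_bound[OF small] big lam_pos[of n]
    by (smt (verit) mult_strict_left_mono zero_less_power)
  then have "(lam 1)^2 * \<rho> < \<Lambda> * (1 - \<tau>)^(2 * m)"
    unfolding lam1 using \<tau>_less_one
    by (simp add: power_mult_distrib power_mult[symmetric] mult.commute[of 2] mult.assoc[symmetric])
  then have "1 < (1 - \<tau>)^(2 * m) * (\<Lambda> / ((lam 1)^2 * \<rho>))"
    using lam_pos[of 0] \<open>\<rho> > 0\<close> by (simp add: field_simps)
  then have "2 * \<tau> * m < log_plus (\<Lambda> / ((lam 1)^2 * \<rho>))"
    by (rule log_plus_bound_from_power[OF \<tau>_pos \<tau>_less_one])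
  then show ?thesis using True \<tau>_pos by (simp add: m_def field_simps)
next
  case False
  then have "real (n - num_large n) < real (num_large n)" by simp
  moreover have "0 \<le> log_plus (\<Lambda> / ((lam 1)^2 * \<rho>)) / (2 * \<tau>)"
    using \<tau>_pos by (simp add: log_plus_def)
  ultimately show ?thesis by linarith
qed

lemma num_large_lower_bound:
  assumes big: "\<forall>j\<in>{1..M}. norm (v j) > \<rho>" and "\<rho> > 0"
  shows "M \<le> 2 * num_large M + log_term \<rho>"
proof -
  define c where "c = log_plus (\<Lambda> / ((lam 1)^2 * \<rho>)) / (2 * \<tau>)"
  have excess: "int k - 2 * int (num_large k) \<le> \<lceil>c\<rceil>" if "k \<le> M" for k
    using that
  proof (induction k)
    case 0
    have "0 \<le> c" using \<tau>_pos by (simp add: c_def log_plus_def)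
    then show ?case by (simp add: good_steps_def)
  next
    case (Suc k)
    show ?case
    proof (cases "large_step k")
      case True
      then show ?thesis using Suc num_large_Suc[of k] by simp
    next
      case False
      have "norm (v (Suc k)) > \<rho>" using big Suc.prems by auto
      from small_step_excess[OF False this \<open>\<rho> > 0\<close>]
      have "int (k - num_large k) - int (num_large k) + 1 \<le> \<lceil>c\<rceil>"
        by (simp add: c_def le_ceiling_iff)
      then show ?thesis using num_large_Suc[of k] False num_large_le[of k] by simp
    qed
  qed
  have "1 / (2 * \<tau>) * log_plus (\<Lambda> / ((lam 1)^2 * \<rho>)) = c" by (simp add: c_def)
  then show ?thesis using excess[of M] by linarith
qed

lemma newton_test_passes_at_solution:
  assumes sol: "x 0 \<in> sol_set F C" and at_x0: "y n = x 0" "\<nu> n = 0" "x n = x 0"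
  shows "lam (Suc n) * L / 2 * norm (lam (Suc n) *\<^sub>R v n + y n - x n) \<le> \<theta>h"
proof (rule ccontr)
  assume fails: "\<not> ?thesis"
  obtain \<mu> where \<mu>: "\<mu> \<in> normal_cone C (x 0)" "F (x 0) + \<mu> = 0" using sol sol_set_iff by blast
  define l where "l = lam (Suc n)"
  define z where "z = y (Suc n)"
  have l: "l > 0" using lam_pos by (simp add: l_def)
  have \<nu>z: "\<nu> (Suc n) \<in> normal_cone C z"
    and err: "norm (l *\<^sub>R (F (x 0) + F' (x 0) (z - x 0) + \<nu> (Suc n)) + z - x 0) \<le> \<sigma>h * norm (z - x 0)"
    using newton_solved[OF fails] at_x0 by (simp_all add: l_def z_def)
  have "x 0 \<in> C" "z \<in> C" using normal_coneD[OF \<mu>(1)] normal_coneD[OF \<nu>z] by auto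
  then have "inner (F' (x 0) (z - x 0)) (z - x 0) \<ge> 0"
    using monotone_derivative_nonneg[OF C_convex _ _ F_deriv F'_lip F_mono] by blast
  from newton_step_length[OF \<mu>(1) \<nu>z this l err]
  have "(1 - \<sigma>h) * norm (z - x 0) \<le> 0" using \<mu>(2) by simp
  then have "z = x 0" using \<sigma>h by (simp add: mult_le_0_iff)
  then have "l * norm (v (Suc n)) \<le> 0" using err l by (simp add: z_def)
  then show False using l v_nonzero[of "Suc n"] by (simp add: mult_le_0_iff)
qed

lemma x0_not_solution: "x 0 \<notin> sol_set F C"
proof
  assume sol: "x 0 \<in> sol_set F C"
  define q where "q = 1 / (1 - \<tau>)"
  have q: "q > 1" using \<tau>_pos \<tau>_less_one by (simp add: q_def)
  have stationary: "y n = x 0 \<and> \<nu> n = 0 \<and> x n = x 0 \<and> lam (Suc n) = lam 1 * q^n" for n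
  proof (induction n)
    case 0
    then show ?case using run_start by simp
  next
    case (Suc n)
    then have "y (Suc n) = y n \<and> \<nu> (Suc n) = \<nu> n"
      using newton_skipped newton_test_passes_at_solution[OF sol] by blast
    moreover have "\<not> large_step n" using calculation Suc \<eta>_pos by simp
    ultimately show ?case using Suc small_step_update by (simp add: q_def field_simps)
  qed
  define c where "c = (lam 1)^2 * norm (F (x 0)) * L / 2"
  have c: "c > 0" using lam_pos[of 0] v_nonzero[of 0] run_start L_pos by (simp add: c_def)
  obtain n where n: "\<theta>h / c < q^n" using real_arch_pow[OF q] by blast
  have "lam (Suc n) * L / 2 * norm (lam (Suc n) *\<^sub>R v n + y n - x n) \<le> \<theta>h"
    using newton_test_passes_at_solution[OF sol] stationary[of n] by blast
  moreover have "lam (Suc n) * L / 2 * norm (lam (Suc n) *\<^sub>R v n + y n - x n) = c * (q^n)^2"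
    using stationary[of n] lam_pos[of 0] q by (simp add: c_def abs_mult power2_eq_square algebra_simps)
  ultimately have "c * (q^n)^2 \<le> \<theta>h" by simp
  moreover have "c * q^n \<le> c * (q^n)^2"
    using c q by (intro mult_left_mono) (auto simp: power2_eq_square)
  moreover have "\<theta>h < c * q^n" using n c by (simp add: field_simps)
  ultimately show False by linarith
qed

definition \<kappa> :: real where "\<kappa> = 1 / sqrt (1 - \<sigma>^2)"

lemma \<kappa>_ge_one: "1 \<le> \<kappa>"
proof -
  have "sqrt (1 - \<sigma>^2) \<le> 1" by simp
  then show ?thesis using one_minus_\<sigma>_sq_pos by (simp add: \<kappa>_def le_divide_eq_1)
qed

lemma lam_sum_pos: "large_steps k \<noteq> {} \<Longrightarrow> lam_sum k > 0"
  using finite_large_steps lam_large_steps_pos by (intro sum_pos) auto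

lemma ergodic_inner_decomposition:
  assumes "large_steps k \<noteq> {}"
  shows "inner (erg_v F \<eta> x y \<nu> lam k - u) (erg_y \<eta> x y lam k - z)
     = (1 / lam_sum k) * (\<Sum>j\<in>large_steps k. lam j * inner (v j - u) (y j - z)) - erg_eps F \<eta> x y \<nu> lam k"
  unfolding erg_v_def erg_y_def erg_eps_def
  by (rule weighted_mean_inner_decomposition[OF finite_large_steps lam_sum_pos[OF assms]])

lemma v_in_enlargement: "v k \<in> enlargement (FN_op F C) 0 (y k)"
  unfolding enlargement_def FN_op_def using monotone_plus_normal_cone[OF F_mono \<nu>_normal_cone] by auto

lemma ergodic_mean_inner_lower_bound:
  assumes "large_steps k \<noteq> {}" "\<mu> \<in> normal_cone C z"
  shows "inner (erg_v F \<eta> x y \<nu> lam k - (F z + \<mu>)) (erg_y \<eta> x y lam k - z) \<ge> - erg_eps F \<eta> x y \<nu> lam k"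
proof -
  have "0 \<le> (\<Sum>j\<in>large_steps k. lam j * inner (v j - (F z + \<mu>)) (y j - z))"
    using monotone_plus_normal_cone[OF F_mono \<nu>_normal_cone assms(2)] lam_large_steps_pos
    by (intro sum_nonneg mult_nonneg_nonneg) (auto simp: less_imp_le)
  then show ?thesis
    unfolding ergodic_inner_decomposition[OF assms(1)] using lam_sum_pos[OF assms(1)] by simp
qed

lemma erg_v_in_enlargement:
  assumes "large_steps k \<noteq> {}"
  shows "erg_v F \<eta> x y \<nu> lam k \<in> enlargement (FN_op F C) (erg_eps F \<eta> x y \<nu> lam k) (erg_y \<eta> x y lam k)"
  unfolding enlargement_def FN_op_def using ergodic_mean_inner_lower_bound[OF assms] by auto

lemma erg_eps_nonneg:
  assumes "large_steps k \<noteq> {}"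
  shows "erg_eps F \<eta> x y \<nu> lam k \<ge> 0"
proof -
  define yb where "yb = erg_y \<eta> x y lam k"
  define vb where "vb = erg_v F \<eta> x y \<nu> lam k"
  define eb where "eb = erg_eps F \<eta> x y \<nu> lam k"
  have S: "lam_sum k > 0" using lam_sum_pos[OF assms] .
  have "lam_sum k * eb = (\<Sum>j\<in>large_steps k. lam j * inner (vb - v j) (yb - y j))"
    using S by (simp add: eb_def erg_eps_def yb_def vb_def inner_diff_left inner_diff_right
        inner_commute algebra_simps)
  also have "\<dots> \<ge> (\<Sum>j\<in>large_steps k. lam j * (- eb))"
    using ergodic_mean_inner_lower_bound[OF assms \<nu>_normal_cone] lam_large_steps_pos
    by (intro sum_mono mult_left_mono) (auto simp: less_imp_le yb_def vb_def eb_def)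
  finally have "lam_sum k * eb \<ge> - (lam_sum k * eb)" by (simp add: sum_distrib_right sum_negf)
  then show ?thesis using S by (simp add: eb_def zero_le_mult_iff)
qed

lemma erg_v_eq:
  assumes "large_steps k \<noteq> {}"
  shows "erg_v F \<eta> x y \<nu> lam k = (1 / (\<tau> * lam_sum k)) *\<^sub>R (x 0 - x k)"
proof -
  have "x 0 - x k = \<tau> *\<^sub>R (\<Sum>j\<in>large_steps k. lam j *\<^sub>R v j)"
    using x_telescope[of k] by (simp add: scaleR_sum_right)
  then show ?thesis using \<tau>_pos unfolding erg_v_def by simp
qed

lemma erg_v_norm_bound:
  assumes "large_steps k \<noteq> {}" "s \<in> sol_set F C"
  shows "norm (erg_v F \<eta> x y \<nu> lam k) \<le> 2 / (\<tau> * lam_sum k) * dist (x 0) s"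
proof -
  have "norm (x 0 - x k) \<le> 2 * norm (x 0 - s)"
    using dist_triangle2[of "x 0" "x k" s] dist_solution_mono[OF assms(2), of k] by (simp add: dist_norm)
  then show ?thesis
    unfolding erg_v_eq[OF assms(1)] using \<tau>_pos lam_sum_pos[OF assms(1)]
    by (simp add: dist_norm divide_right_mono)
qed

lemma erg_y_dist_bound:
  assumes "large_steps k \<noteq> {}" "s \<in> sol_set F C"
  shows "norm (erg_y \<eta> x y lam k - s) \<le> \<kappa> * norm (x 0 - s)"
proof -
  define D where "D = norm (x 0 - s)"
  have S: "lam_sum k > 0" using lam_sum_pos[OF assms(1)] .
  have y_bound: "norm (y j - s) \<le> \<kappa> * D" if j: "j \<in> large_steps k" for j
  proof -
    obtain n where n: "j = Suc n" "large_step n" using large_stepsE[OF j] by blast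
    have "(1 - \<sigma>^2) * norm (y j - s)^2 \<le> norm (x n - s)^2"
      using large_step_dist_bound[OF n(2) assms(2)] n by simp
    also have "\<dots> \<le> D^2" using dist_solution_mono[OF assms(2), of n] by (simp add: D_def power_mono)
    finally have "norm (y j - s)^2 \<le> (\<kappa> * D)^2"
      using one_minus_\<sigma>_sq_pos by (simp add: \<kappa>_def power_divide field_simps)
    moreover have "0 \<le> \<kappa> * D" using \<kappa>_ge_one by (simp add: D_def)
    ultimately show ?thesis using power2_le_iff_abs_le by fastforce
  qed
  have "erg_y \<eta> x y lam k - s = (1 / lam_sum k) *\<^sub>R (\<Sum>j\<in>large_steps k. lam j *\<^sub>R (y j - s))"
    using S by (simp add: erg_y_def scaleR_diff_right sum_subtractf scaleR_sum_left[symmetric])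
  then have "norm (erg_y \<eta> x y lam k - s) = (1 / lam_sum k) * norm (\<Sum>j\<in>large_steps k. lam j *\<^sub>R (y j - s))"
    using S by simp
  also have "\<dots> \<le> (1 / lam_sum k) * (\<Sum>j\<in>large_steps k. norm (lam j *\<^sub>R (y j - s)))"
    using S by (intro mult_left_mono norm_sum) auto
  also have "\<dots> \<le> (1 / lam_sum k) * (\<Sum>j\<in>large_steps k. lam j * (\<kappa> * D))"
    using S y_bound lam_large_steps_pos
    by (intro mult_left_mono sum_mono) (auto simp: less_imp_le mult_left_mono)
  also have "\<dots> = \<kappa> * D" using S by (simp add: sum_distrib_right[symmetric])
  finally show ?thesis by (simp add: D_def)
qed

lemma erg_eps_norm_decrease:
  assumes "large_steps k \<noteq> {}"
  shows "2 * \<tau> * (lam_sum k * erg_eps F \<eta> x y \<nu> lam k)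
    \<le> norm (x 0 - erg_y \<eta> x y lam k)^2 - norm (x k - erg_y \<eta> x y lam k)^2"
proof -
  define yb where "yb = erg_y \<eta> x y lam k"
  have "lam_sum k * erg_eps F \<eta> x y \<nu> lam k = (\<Sum>j\<in>large_steps k. lam j * inner (v j) (y j - yb))"
    using ergodic_inner_decomposition[OF assms, of 0 yb] lam_sum_pos[OF assms]
    by (simp add: yb_def field_simps)
  then have "2 * \<tau> * (lam_sum k * erg_eps F \<eta> x y \<nu> lam k)
      = (\<Sum>j\<in>large_steps k. 2 * \<tau> * lam j * inner (y j - yb) (v j))"
    by (simp add: sum_distrib_left inner_commute algebra_simps)
  also have "\<dots> \<le> (\<Sum>j\<in>large_steps k. 2 * \<tau> * lam j * inner (y j - yb) (v j)
      + \<tau> * (1 - \<sigma>^2) * norm (y j - x (j - 1))^2)"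
    using one_minus_\<sigma>_sq_pos \<tau>_pos by (intro sum_mono) simp
  also have "\<dots> \<le> norm (x 0 - yb)^2 - norm (x k - yb)^2"
    using norm_decrease_telescope[of k yb] by simp
  finally show ?thesis by (simp add: yb_def)
qed

lemma erg_eps_bound:
  assumes "large_steps k \<noteq> {}" "s \<in> sol_set F C"
  shows "erg_eps F \<eta> x y \<nu> lam k \<le> 2 * \<kappa> / (\<tau> * lam_sum k) * dist (x 0) s ^ 2"
proof -
  define D where "D = norm (x 0 - s)"
  have "norm (x k - x 0) \<le> 2 * D"
    using dist_triangle2[of "x k" "x 0" s] dist_solution_mono[OF assms(2), of k]
    by (simp add: D_def dist_norm)
  moreover have "norm (erg_y \<eta> x y lam k - x 0) \<le> (1 + \<kappa>) * D"
    using dist_triangle2[of "erg_y \<eta> x y lam k" "x 0" s] erg_y_dist_bound[OF assms]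
    by (simp add: D_def dist_norm algebra_simps)
  ultimately have "2 * \<tau> * (lam_sum k * erg_eps F \<eta> x y \<nu> lam k) \<le> 4 * \<kappa> * D^2"
    using erg_eps_norm_decrease[OF assms(1)] norm_square_difference_bound[OF _ _ \<kappa>_ge_one]
    by (smt (verit))
  then show ?thesis
    using \<tau>_pos lam_sum_pos[OF assms(1)] by (simp add: D_def dist_norm field_simps)
qed

lemma lam_sum_cube_bound:
  "\<eta>^2 * real (num_large k)^3 \<le> lam_sum k^2 * (\<Sum>j\<in>large_steps k. norm (y j - x (j - 1))^2)"
proof -
  define e where "e j = norm (y j - x (j - 1))" for j
  have e: "e j > 0" "\<eta> / e j \<le> lam j" if j: "j \<in> large_steps k" for j
  proof -
    obtain n where "j = Suc n" "large_step n" using large_stepsE[OF j] by blast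
    then have "\<eta> \<le> lam j * e j" by (simp add: e_def)
    moreover from this have "e j > 0" using \<eta>_pos lam_pos by (cases "e j = 0") (auto simp: e_def)
    ultimately show "e j > 0" "\<eta> / e j \<le> lam j" by (simp_all add: field_simps)
  qed
  have "\<eta> * (\<Sum>j\<in>large_steps k. 1 / e j) \<le> lam_sum k"
    using e by (simp add: sum_distrib_left sum_mono)
  then have sq: "(\<eta> * (\<Sum>j\<in>large_steps k. 1 / e j))^2 \<le> lam_sum k^2"
    using e \<eta>_pos by (intro power_mono mult_nonneg_nonneg sum_nonneg) (auto simp: less_imp_le)
  have "real (num_large k)^3 \<le> (\<Sum>j\<in>large_steps k. 1 / e j)^2 * (\<Sum>j\<in>large_steps k. e j^2)"
    using card_cube_le_sum_inverse_square_mult_sum_square[OF finite_large_steps, where a=e] e by blast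
  then have "\<eta>^2 * real (num_large k)^3 \<le> \<eta>^2 * ((\<Sum>j\<in>large_steps k. 1 / e j)^2 * (\<Sum>j\<in>large_steps k. e j^2))"
    by (rule mult_left_mono) simp
  also have "\<dots> = (\<eta> * (\<Sum>j\<in>large_steps k. 1 / e j))^2 * (\<Sum>j\<in>large_steps k. e j^2)"
    by (simp add: power_mult_distrib)
  also have "\<dots> \<le> lam_sum k^2 * (\<Sum>j\<in>large_steps k. e j^2)"
    using sq by (intro mult_right_mono sum_nonneg) auto
  finally show ?thesis by (simp add: e_def)
qed

lemma d0_pos: "closed C \<Longrightarrow> sol_set F C \<noteq> {} \<Longrightarrow> d0 > 0"
  using infdist_pos_not_in_closed[OF closed_sol_set[OF _ has_derivative_within_continuous_on[OF F_deriv]]]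
    x0_not_solution by blast

lemma many_large_steps:
  assumes "\<forall>j\<in>{1..N + log_term \<rho>}. norm (v j) > \<rho>" "\<rho> > 0"
  shows "real N \<le> 2 * real (num_large (N + log_term \<rho>))"
  using num_large_lower_bound[OF assms] by linarith

lemma sum_large_step_lengths_infdist:
  assumes "sol_set F C \<noteq> {}"
  shows "(\<Sum>j\<in>large_steps k. norm (y j - x (j - 1))^2) \<le> d0^2 / (\<tau> * (1 - \<sigma>^2))"
proof -
  have pos: "0 < \<tau> * (1 - \<sigma>^2)" using \<tau>_pos one_minus_\<sigma>_sq_pos by simp
  have "(\<Sum>j\<in>large_steps k. norm (y j - x (j - 1))^2) \<le> 1 / (\<tau> * (1 - \<sigma>^2)) * dist (x 0) s ^ 2"
    if "s \<in> sol_set F C" for s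
    using sum_large_step_lengths_bound[OF that, of k] pos
    by (simp add: dist_norm pos_le_divide_eq mult.commute)
  then have "(\<Sum>j\<in>large_steps k. norm (y j - x (j - 1))^2) \<le> 1 / (\<tau> * (1 - \<sigma>^2)) * d0^2"
    using pos by (intro le_mult_infdist_power[OF assms]) auto
  then show ?thesis by simp
qed

lemma lam_sum_cube_bound_infdist:
  assumes "sol_set F C \<noteq> {}"
  shows "\<eta>^2 * real (num_large k)^3 \<le> lam_sum k^2 * (d0^2 / (\<tau> * (1 - \<sigma>^2)))"
  using lam_sum_cube_bound[of k] sum_large_step_lengths_infdist[OF assms, of k]
  by (smt (verit) mult_left_mono zero_le_power2)

lemma pointwise_complexity:
  assumes "closed C" "sol_set F C \<noteq> {}" "\<rho> > 0"
  shows "\<exists>k\<in>{1..nat \<lceil>(2 / (\<tau> * \<eta> * (1 - \<sigma>))) * (d0^2 / \<rho>)\<rceil> + log_term \<rho>}.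
           \<nu> k \<in> normal_cone C (y k) \<and> norm (v k) \<le> \<rho>"
proof (rule ccontr)
  define X where "X = (2 / (\<tau> * \<eta> * (1 - \<sigma>))) * (d0^2 / \<rho>)"
  define M where "M = nat \<lceil>X\<rceil> + log_term \<rho>"
  assume "\<not> ?thesis"
  then have big: "\<forall>j\<in>{1..M}. norm (v j) > \<rho>" using \<nu>_normal_cone by (force simp: M_def X_def)
  have "X > 0" using d0_pos[OF assms(1,2)] \<open>\<rho> > 0\<close> \<tau>_pos \<eta>_pos \<sigma>_less_one by (simp add: X_def)
  have A: "X \<le> 2 * real (num_large M)"
    using many_large_steps[OF big[unfolded M_def] \<open>\<rho> > 0\<close>] by (simp add: M_def) linarith
  then have ne: "large_steps M \<noteq> {}" using \<open>X > 0\<close> by auto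
  have "\<rho> * real (num_large M) = (\<Sum>j\<in>large_steps M. \<rho>)" by simp
  also have "\<dots> < (\<Sum>j\<in>large_steps M. norm (v j))"
    using big large_steps_subset by (intro sum_strict_mono[OF finite_large_steps ne]) auto
  also have "\<dots> \<le> (\<Sum>j\<in>large_steps M. (1 + \<sigma>) / \<eta> * norm (y j - x (j - 1))^2)"
    using large_step_v_bound \<eta>_pos by (intro sum_mono) (simp add: field_simps)
  also have "\<dots> = (1 + \<sigma>) / \<eta> * (\<Sum>j\<in>large_steps M. norm (y j - x (j - 1))^2)"
    by (simp add: sum_distrib_left)
  also have "\<dots> \<le> (1 + \<sigma>) / \<eta> * (d0^2 / (\<tau> * (1 - \<sigma>^2)))"
    using sum_large_step_lengths_infdist[OF assms(2), of M] \<sigma>_pos \<eta>_pos by (intro mult_left_mono) auto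
  also have "\<dots> = \<rho> * (X / 2)"
  proof -
    have key: "b / \<eta> * (d0^2 / (\<tau> * (a * b))) = \<rho> * (2 / (\<tau> * \<eta> * a) * (d0^2 / \<rho>) / 2)"
      if "0 < a" "0 < b" for a b
      using that \<tau>_pos \<eta>_pos \<open>\<rho> > 0\<close> by (simp add: field_simps)
    have "1 - \<sigma>^2 = (1 - \<sigma>) * (1 + \<sigma>)" by (simp add: algebra_simps power2_eq_square)
    then show ?thesis unfolding X_def by (simp only:) (rule key, use \<sigma>_pos \<sigma>_less_one in auto)
  qed
  finally show False using A \<open>\<rho> > 0\<close> by (simp add: mult_less_cancel_left_pos)
qed

lemma erg_v_norm_le:
  assumes ne: "large_steps k \<noteq> {}" and sol: "sol_set F C \<noteq> {}" and "\<rho> > 0" "d0 > 0"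
    and A: "2 * root 3 4 / (\<tau> * \<eta> powr (2/3) * (1 - \<sigma>^2) powr (1/3)) * (d0^2 / \<rho>) powr (2/3)
              \<le> 2 * real (num_large k)"
  shows "norm (erg_v F \<eta> x y \<nu> lam k) \<le> \<rho>"
proof -
  define w where "w = 1 - \<sigma>^2"
  define X where "X = 2 * root 3 4 / (\<tau> * \<eta> powr (2/3) * w powr (1/3)) * (d0^2 / \<rho>) powr (2/3)"
  have w: "w > 0" using one_minus_\<sigma>_sq_pos by (simp add: w_def)
  have "norm (erg_v F \<eta> x y \<nu> lam k) \<le> 2 / (\<tau> * lam_sum k) * d0 ^ 1"
    using erg_v_norm_bound[OF ne] \<tau>_pos lam_sum_pos[OF ne]
    by (intro le_mult_infdist_power[OF sol]) auto
  also have "\<dots> = (2 * d0) / (\<tau> * lam_sum k)" by simp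
  also have "\<dots> \<le> \<rho>"
  proof (rule le_of_square_mult_bounds[where E = "d0^2 / (\<tau> * w)" and A = "real (num_large k)" and \<eta> = \<eta>])
    show "\<eta>^2 * real (num_large k)^3 \<le> lam_sum k^2 * (d0^2 / (\<tau> * w))"
      using lam_sum_cube_bound_infdist[OF sol] by (simp add: w_def)
    have "(X / 2)^3 \<le> real (num_large k)^3"
      using A \<open>d0 > 0\<close> \<open>\<rho> > 0\<close> \<tau>_pos \<eta>_pos w by (intro power_mono) (auto simp: X_def w_def)
    moreover have "(X / 2)^3 = 4 * (d0^2 / \<rho>)^2 / (\<tau>^3 * \<eta>^2 * w)"
      unfolding X_def using complexity_constant_cube[of \<tau> \<eta> w "d0^2 / \<rho>" "1/3"] \<tau>_pos \<eta>_pos w \<open>d0 > 0\<close> \<open>\<rho> > 0\<close>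
      by simp
    then have "(X / 2)^3 * (\<tau> * \<rho> * \<eta>)^2 = (2 * d0)^2 * (d0^2 / (\<tau> * w))"
      using \<tau>_pos \<eta>_pos w \<open>\<rho> > 0\<close> by (simp add: field_simps power2_eq_square power3_eq_cube)
    ultimately show "(2 * d0)^2 * (d0^2 / (\<tau> * w)) \<le> (\<tau> * \<rho> * \<eta>)^2 * real (num_large k)^3"
      by (smt (verit) mult_right_mono zero_le_power2 mult.commute)
  qed (use \<open>d0 > 0\<close> \<open>\<rho> > 0\<close> \<tau>_pos w lam_sum_pos[OF ne] in auto)
  finally show ?thesis .
qed

lemma erg_eps_le:
  assumes ne: "large_steps k \<noteq> {}" and sol: "sol_set F C \<noteq> {}" and "\<rho> > 0" "d0 > 0"
    and A: "2 * root 3 4 / (\<tau> * \<eta> powr (2/3) * (1 - \<sigma>^2) powr (2/3)) * (d0^3 / \<rho>) powr (2/3)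
              \<le> 2 * real (num_large k)"
  shows "erg_eps F \<eta> x y \<nu> lam k \<le> \<rho>"
proof -
  define w where "w = 1 - \<sigma>^2"
  define X where "X = 2 * root 3 4 / (\<tau> * \<eta> powr (2/3) * w powr (2/3)) * (d0^3 / \<rho>) powr (2/3)"
  have w: "w > 0" using one_minus_\<sigma>_sq_pos by (simp add: w_def)
  have Q: "(2 * \<kappa> * d0^2)^2 = 4 * (d0^2)^2 / w"
    using w by (simp add: \<kappa>_def w_def power_mult_distrib power_divide)
  have "erg_eps F \<eta> x y \<nu> lam k \<le> 2 * \<kappa> / (\<tau> * lam_sum k) * d0 ^ 2"
    using erg_eps_bound[OF ne] \<tau>_pos lam_sum_pos[OF ne] \<kappa>_ge_one
    by (intro le_mult_infdist_power[OF sol]) auto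
  also have "\<dots> = (2 * \<kappa> * d0^2) / (\<tau> * lam_sum k)" by simp
  also have "\<dots> \<le> \<rho>"
  proof (rule le_of_square_mult_bounds[where E = "d0^2 / (\<tau> * w)" and A = "real (num_large k)" and \<eta> = \<eta>])
    show "\<eta>^2 * real (num_large k)^3 \<le> lam_sum k^2 * (d0^2 / (\<tau> * w))"
      using lam_sum_cube_bound_infdist[OF sol] by (simp add: w_def)
    have "(X / 2)^3 \<le> real (num_large k)^3"
      using A \<open>d0 > 0\<close> \<open>\<rho> > 0\<close> \<tau>_pos \<eta>_pos w by (intro power_mono) (auto simp: X_def w_def)
    moreover have "(X / 2)^3 = 4 * (d0^3 / \<rho>)^2 / (\<tau>^3 * \<eta>^2 * w^2)"
      unfolding X_def using complexity_constant_cube[of \<tau> \<eta> w "d0^3 / \<rho>" "2/3"] \<tau>_pos \<eta>_pos w \<open>d0 > 0\<close> \<open>\<rho> > 0\<close>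
      by (simp add: powr_numeral)
    then have "(X / 2)^3 * (\<tau> * \<rho> * \<eta>)^2 = (2 * \<kappa> * d0^2)^2 * (d0^2 / (\<tau> * w))"
      unfolding Q using \<tau>_pos \<eta>_pos w \<open>\<rho> > 0\<close> by (simp add: field_simps power2_eq_square power3_eq_cube)
    ultimately show "(2 * \<kappa> * d0^2)^2 * (d0^2 / (\<tau> * w)) \<le> (\<tau> * \<rho> * \<eta>)^2 * real (num_large k)^3"
      by (smt (verit) mult_right_mono zero_le_power2 mult.commute)
  qed (use \<open>d0 > 0\<close> \<open>\<rho> > 0\<close> \<tau>_pos w \<kappa>_ge_one lam_sum_pos[OF ne] in auto)
  finally show ?thesis .
qed

lemma ergodic_complexity:
  assumes "closed C" "sol_set F C \<noteq> {}" "\<rho> > 0"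
  shows "\<exists>k\<in>{1..max (nat \<lceil>(2 * root 3 4 / (\<tau> * \<eta> powr (2/3) * (1 - \<sigma>^2) powr (1/3)))
                          * (d0^2 / \<rho>) powr (2/3)\<rceil>)
                  (nat \<lceil>(2 * root 3 4 / (\<tau> * \<eta> powr (2/3) * (1 - \<sigma>^2) powr (2/3)))
                          * (d0^3 / \<rho>) powr (2/3)\<rceil>) + log_term \<rho>}.
        (\<nu> k \<in> normal_cone C (y k) \<and> v k \<in> enlargement (FN_op F C) 0 (y k) \<and> max (norm (v k)) 0 \<le> \<rho>)
      \<or> (large_steps k \<noteq> {} \<and> erg_eps F \<eta> x y \<nu> lam k \<ge> 0 \<and>
           erg_v F \<eta> x y \<nu> lam k \<in> enlargement (FN_op F C) (erg_eps F \<eta> x y \<nu> lam k) (erg_y \<eta> x y lam k) \<and>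
           max (norm (erg_v F \<eta> x y \<nu> lam k)) (erg_eps F \<eta> x y \<nu> lam k) \<le> \<rho>)"
    (is "\<exists>k\<in>{1..max (nat \<lceil>?X1\<rceil>) (nat \<lceil>?X2\<rceil>) + _}. ?point k \<or> ?ergodic k")
proof (rule ccontr)
  define M where "M = max (nat \<lceil>?X1\<rceil>) (nat \<lceil>?X2\<rceil>) + log_term \<rho>"
  assume "\<not> ?thesis"
  then have none: "\<not> ?point k" "\<not> ?ergodic k" if "k \<in> {1..M}" for k
    using that by (auto simp: M_def)
  have big: "\<forall>j\<in>{1..M}. norm (v j) > \<rho>"
    using none(1) \<nu>_normal_cone v_in_enlargement by force
  have d0: "d0 > 0" using d0_pos[OF assms(1,2)] .
  have X: "?X1 \<le> 2 * real (num_large M)" "?X2 \<le> 2 * real (num_large M)"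
    using many_large_steps[OF big[unfolded M_def] \<open>\<rho> > 0\<close>] by (simp_all add: M_def) linarith+
  have "?X1 > 0" using d0 \<open>\<rho> > 0\<close> \<tau>_pos \<eta>_pos one_minus_\<sigma>_sq_pos by simp
  then have ne: "large_steps M \<noteq> {}" using X(1) by auto
  then have "M \<in> {1..M}" using large_steps_subset by fastforce
  moreover have "?ergodic M"
    using ne erg_eps_nonneg erg_v_in_enlargement erg_v_norm_le[OF ne assms(2,3) d0 X(1)]
      erg_eps_le[OF ne assms(2,3) d0 X(2)] by simp
  ultimately show False using none(2) by blast
qed

end

theorem theorem4p9:
  fixes F :: "'a::{real_inner, complete_space} \<Rightarrow> 'a"
    and F' :: "'a \<Rightarrow> 'a \<Rightarrow>\<^sub>L 'a"
    and C :: "'a set"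
    and L \<sigma>h \<theta> \<eta> \<rho> :: real
    and x y \<nu> :: "nat \<Rightarrow> 'a" and lam :: "nat \<Rightarrow> real"
  assumes C_ne: "C \<noteq> {}" and C_closed: "closed C" and C_convex: "convex C"
    and F_mono: "\<forall>u\<in>C. \<forall>w\<in>C. inner (F u - F w) (u - w) \<ge> 0"
    and F_deriv: "\<forall>u\<in>C. (F has_derivative blinfun_apply (F' u)) (at u within C)"
    and F'_cont: "continuous_on C F'"
    and L_pos: "L > 0"
    and F'_lip: "\<forall>u\<in>C. \<forall>w\<in>C. norm (F' u - F' w) \<le> L * norm (u - w)"
    and sol_ne: "sol_set F C \<noteq> {}"
    and sh: "0 \<le> \<sigma>h" "\<sigma>h < 1/2"
    and th: "0 < \<theta>" "\<theta> < (1 - \<sigma>h) * (1 - 2 * \<sigma>h)"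
    and eta: "\<eta> > 2 * theta_hat \<sigma>h \<theta> / L"
    and run: "alg2_run F F' C L \<sigma>h \<theta> \<eta> x y \<nu> lam"
    and rho: "\<rho> > 0"
  shows
   "(let d0 = infdist (x 0) (sol_set F C);
         \<sigma> = 2 * theta_hat \<sigma>h \<theta> / (\<eta> * L);
         \<tau> = tau_param \<sigma>h \<theta> \<eta> L;
         logterm = nat \<lceil>1 / (2 * \<tau>) * log_plus ((\<eta> + 2 * theta_hat \<sigma>h \<theta> / L) / ((lam 1)^2 * \<rho>))\<rceil>;
         Ma = nat \<lceil>(2 / (\<tau> * \<eta> * (1 - \<sigma>))) * (d0^2 / \<rho>)\<rceil> + logterm;
         Mb = max (nat \<lceil>(2 * root 3 4 / (\<tau> * \<eta> powr (2/3) * (1 - \<sigma>^2) powr (1/3)))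
                          * (d0^2 / \<rho>) powr (2/3)\<rceil>)
                  (nat \<lceil>(2 * root 3 4 / (\<tau> * \<eta> powr (2/3) * (1 - \<sigma>^2) powr (2/3)))
                          * (d0^3 / \<rho>) powr (2/3)\<rceil>) + logterm
     in
     (\<exists>k\<in>{1..Ma}. \<nu> k \<in> normal_cone C (y k) \<and> norm (F (y k) + \<nu> k) \<le> \<rho>) \<and>
     (\<exists>k\<in>{1..Mb}.
        (\<nu> k \<in> normal_cone C (y k) \<and> F (y k) + \<nu> k \<in> enlargement (FN_op F C) 0 (y k)
           \<and> max (norm (F (y k) + \<nu> k)) 0 \<le> \<rho>)
      \<or> (good_steps \<eta> x y lam k \<noteq> {} \<and> erg_eps F \<eta> x y \<nu> lam k \<ge> 0 \<and>
           erg_v F \<eta> x y \<nu> lam k \<in> enlargement (FN_op F C) (erg_eps F \<eta> x y \<nu> lam k) (erg_y \<eta> x y lam k) \<and>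
           max (norm (erg_v F \<eta> x y \<nu> lam k)) (erg_eps F \<eta> x y \<nu> lam k) \<le> \<rho>)))"
proof -
  interpret alg2_trajectory F F' C L \<sigma>h \<theta> \<eta> x y \<nu> lam
    using C_convex F_mono F_deriv L_pos F'_lip sh th eta run by unfold_locales auto
  show ?thesis
    unfolding Let_def
    using pointwise_complexity[OF C_closed sol_ne rho] ergodic_complexity[OF C_closed sol_ne rho]
    by blast
qed

end
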